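(* There is an absolute constant $c>0$ such that the following holds. Let $\beta^*\in\mathbb R^d$, $\mathbf X\in\mathbb R^{n\times d}$ with i.i.d. $N(0,1)$ entries, and $\eta\in\mathbb R^n$ deterministic with $|\{i:|\eta_i|\le1\}|\ge\alpha n$ for some $\alpha\in(0,1]$; let $\mathbf y=\mathbf X\beta^*+\eta$. Let $\hat\beta$ be the output of the Coordinate-wise Median Algorithm on $(\mathbf y,\mathbf X)$. Then for any $0<\tau\le\alpha^2n$, \[\|\beta^*-\hat\beta\|^2\le\frac{d\,\tau}{\alpha^2n}\big(1+\|\beta^*\|^2\big)\] with probability at least $1-2\exp(\ln d-c\tau)$.
   Context: Coordinate-wise Median Algorithm on input $(y,X)\in\mathbb R^n\times\mathbb R^{n\times d}$: sample independent $w_i\sim N(0,1)$ and Rademacher signs $\sigma_i$, independent of everything else, and set $y'_i=\sigma_iy_i+w_i$, $X'_{i,\cdot}=\sigma_iX_{i,\cdot}$. For each $j\in[d]$ let $M_j=\{i:|X'_{ij}|\ge1/2\}$ and let $\hat\beta_j$ be the median of $\{y'_i/X'_{ij}:i\in M_j\}$. Output $\hat\beta=(\hat\beta_1,\dots,\hat\beta_d)$. *)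

theory Defs
  imports "HOL-Probability.Probability"
begin

definition std_gauss :: "real measure" where
  "std_gauss = density lborel (\<lambda>x. ennreal (std_normal_density x))"

definition rademacher :: "real measure" where
  "rademacher = measure_pmf (pmf_of_set {-1, 1})"

definition median :: "real list \<Rightarrow> real" where
  "median xs = (let ys = sort xs; k = length ys in
     if k = 0 then 0
     else if odd k then ys ! (k div 2)
     else (ys ! (k div 2 - 1) + ys ! (k div 2)) / 2)"

text \<open>Output of the Coordinate-wise Median Algorithm on input (y, X) with
  auxiliary randomness w (Gaussian) and sigma (Rademacher signs).
  Rows i < n, columns j < d.\<close>
definition cwm_estimate ::
  "nat \<Rightarrow> (nat \<Rightarrow> real) \<Rightarrow> (nat \<Rightarrow> nat \<Rightarrow> real) \<Rightarrow> (nat \<Rightarrow> real) \<Rightarrow> (nat \<Rightarrow> real)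
     \<Rightarrow> nat \<Rightarrow> real" where
  "cwm_estimate n y X w \<sigma> j =
     (let y' = (\<lambda>i. \<sigma> i * y i + w i); X' = (\<lambda>i. \<sigma> i * X i j) in
      median (map (\<lambda>i. y' i / X' i) (filter (\<lambda>i. \<bar>X' i\<bar> \<ge> 1/2) [0..<n])))"

definition cwm_space :: "nat \<Rightarrow> nat \<Rightarrow>
    ((nat \<Rightarrow> nat \<Rightarrow> real) \<times> (nat \<Rightarrow> real) \<times> (nat \<Rightarrow> real)) measure" where
  "cwm_space n d =
     (PiM {..<n} (\<lambda>i. PiM {..<d} (\<lambda>j. std_gauss)))
       \<Otimes>\<^sub>M ((PiM {..<n} (\<lambda>i. std_gauss)) \<Otimes>\<^sub>M (PiM {..<n} (\<lambda>i. rademacher)))"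

end

theory Submission
  imports Defs "HOL-Probability.Hoeffding"
begin

text \<open>Fix a coordinate \<open>j\<close>. After the sign flip, row \<open>i\<close> contributes the ratio
  \<open>y'\<^sub>i / X'\<^sub>i\<^sub>j = \<beta>\<^sub>j + (\<Sum>\<^sub>k\<^sub>\<noteq>\<^sub>j \<beta>\<^sub>k X\<^sub>i\<^sub>k + \<eta>\<^sub>i + \<sigma>\<^sub>i w\<^sub>i) / X\<^sub>i\<^sub>j\<close>.
  Replacing \<open>X\<^sub>i\<^sub>j\<close> by \<open>-X\<^sub>i\<^sub>j\<close> flips the sign of the error, so a selected row is as likely to
  err by more than \<open>t\<close> upwards as downwards; rows whose error lies in \<open>[-t, t]\<close> therefore push
  the median towards \<open>\<beta>\<^sub>j\<close>. For a row with \<open>|\<eta>\<^sub>i| \<le> 1\<close> this happens with probability at least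
  a constant times \<open>t / (1 + \<parallel>\<beta>\<parallel>\<^sup>2)\<^sup>1\<^sup>/\<^sup>2\<close>, by anticoncentration of the Gaussian
  \<open>\<Sum>\<^sub>k\<^sub>\<noteq>\<^sub>j \<beta>\<^sub>k X\<^sub>i\<^sub>k + \<sigma>\<^sub>i w\<^sub>i\<close>. The rows are independent, so Hoeffding's lemma and a Chernoff
  bound show that the median misses \<open>\<beta>\<^sub>j\<close> by more than \<open>t\<close> with probability at most
  \<open>2 exp (-c (\<alpha> n t)\<^sup>2 / (n (1 + \<parallel>\<beta>\<parallel>\<^sup>2)))\<close>; taking \<open>t\<^sup>2 = (1 + \<parallel>\<beta>\<parallel>\<^sup>2) \<tau> / (\<alpha>\<^sup>2 n)\<close>
  and a union bound over the \<open>d\<close> coordinates gives the theorem.\<close>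

section \<open>Gaussian and Rademacher measures\<close>

lemma sets_std_gauss [simp, measurable_cong]: "sets std_gauss = sets borel"
  by (simp add: std_gauss_def)

lemma space_std_gauss [simp]: "space std_gauss = UNIV"
  by (simp add: std_gauss_def)

lemma prob_space_std_gauss [simp, intro]: "prob_space std_gauss"
  unfolding std_gauss_def by (rule prob_space_normal_density) simp

lemma sets_rademacher [simp]: "sets rademacher = UNIV"
  by (simp add: rademacher_def)

lemma space_rademacher [simp]: "space rademacher = UNIV"
  by (simp add: rademacher_def)

lemma prob_space_rademacher [simp, intro]: "prob_space rademacher"
  unfolding rademacher_def by (rule prob_space_measure_pmf)

text \<open>Not declared \<open>measurable\<close>: a rule matching every function sends the measurability
  prover into a loop.\<close>
lemma borel_measurable_rademacher: "f \<in> borel_measurable rademacher"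
  by (simp add: measurable_def)

lemma sigma_finite_rademacher: "sigma_finite_measure rademacher"
  by (intro prob_space_imp_sigma_finite) auto

lemma nn_integral_rademacher: "(\<integral>\<^sup>+ s. f s \<partial>rademacher) = (f 1 + f (-1)) / 2"
  unfolding rademacher_def by (subst nn_integral_pmf_of_set) (auto simp: add.commute)

lemma nn_integral_std_gauss:
  assumes [measurable]: "f \<in> borel_measurable borel"
  shows "(\<integral>\<^sup>+ y. f y \<partial>std_gauss) = (\<integral>\<^sup>+ y. ennreal (std_normal_density y) * f y \<partial>lborel)"
  unfolding std_gauss_def by (subst nn_integral_density) auto

lemma nn_integral_std_gauss_uminus:
  assumes [measurable]: "f \<in> borel_measurable borel"
  shows "(\<integral>\<^sup>+ y. f (- y) \<partial>std_gauss) = (\<integral>\<^sup>+ y. f y \<partial>std_gauss)"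
proof -
  have "(\<integral>\<^sup>+ y. f y \<partial>std_gauss) = (\<integral>\<^sup>+ y. ennreal (std_normal_density y) * f y \<partial>lborel)"
    by (rule nn_integral_std_gauss) simp
  also have "\<dots> = ennreal \<bar>-1\<bar> *
      (\<integral>\<^sup>+ y. ennreal (std_normal_density (0 + -1 * y)) * f (0 + -1 * y) \<partial>lborel)"
    by (rule nn_integral_real_affine) auto
  also have "\<dots> = (\<integral>\<^sup>+ y. ennreal (std_normal_density y) * f (- y) \<partial>lborel)"
    by (simp add: normal_density_def)
  also have "\<dots> = (\<integral>\<^sup>+ y. f (- y) \<partial>std_gauss)"
    by (rule nn_integral_std_gauss[symmetric]) simp
  finally show ?thesis ..
qed

lemma nn_integral_std_gauss_symmetrize:
  assumes [measurable]: "A \<in> sets borel"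
  shows "(\<integral>\<^sup>+ w. (indicator A w + indicator A (- w)) / 2 \<partial>std_gauss) = emeasure std_gauss A"
proof -
  have m: "(indicator A :: real \<Rightarrow> ennreal) \<in> borel_measurable borel"
    by measurable
  have m_gauss: "(indicator A :: real \<Rightarrow> ennreal) \<in> borel_measurable std_gauss"
    by measurable
  have m_uminus: "(\<lambda>w. indicator A (- w) :: ennreal) \<in> borel_measurable std_gauss"
    by measurable
  have "(\<integral>\<^sup>+ w. (indicator A w + indicator A (- w)) / 2 \<partial>std_gauss)
      = (\<integral>\<^sup>+ w. indicator A w + indicator A (- w) \<partial>std_gauss) / 2"
    by (rule nn_integral_divide) (use m_gauss m_uminus in auto)
  also have "\<dots> = ((\<integral>\<^sup>+ w. indicator A w \<partial>std_gauss) + (\<integral>\<^sup>+ w. indicator A (- w) \<partial>std_gauss)) / 2"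
    by (subst nn_integral_add) (use m_gauss m_uminus in auto)
  also have "(\<integral>\<^sup>+ w. indicator A (- w) \<partial>std_gauss) = (\<integral>\<^sup>+ w. indicator A w \<partial>std_gauss)"
    by (rule nn_integral_std_gauss_uminus[OF m])
  also have "(\<integral>\<^sup>+ w. indicator A w \<partial>std_gauss) = emeasure std_gauss A"
    by simp
  also have "(emeasure std_gauss A + emeasure std_gauss A) / 2 = emeasure std_gauss A"
    by (simp add: ennreal_mult_divide_eq flip: mult_2_right)
  finally show ?thesis .
qed

lemma sets_borel_abs_add_le: "{w::real. \<bar>a + w\<bar> \<le> u} \<in> sets borel"
proof -
  have "{w::real. \<bar>a + w\<bar> \<le> u} = {- u - a..u - a}" by (auto simp: abs_le_iff)
  then show ?thesis by simp
qed

lemma nn_integral_indicator_ge_interval: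
  assumes "a \<le> b" "{a..b} \<subseteq> S" "\<And>y. y \<in> {a..b} \<Longrightarrow> C \<le> f y" "0 \<le> C"
  shows "ennreal (C * (b - a)) \<le> (\<integral>\<^sup>+ y. indicator S y * ennreal (f y) \<partial>lborel)"
proof -
  have "ennreal (C * (b - a)) = (\<integral>\<^sup>+ y. ennreal C * indicator {a..b} y \<partial>lborel)"
    using assms by (simp add: nn_integral_cmult_indicator ennreal_mult)
  also have "\<dots> \<le> (\<integral>\<^sup>+ y. indicator S y * ennreal (f y) \<partial>lborel)"
    using assms
    by (intro nn_integral_mono) (auto simp: indicator_def subset_iff intro!: ennreal_leI)
  finally show ?thesis .
qed

definition gauss_interval_const :: real where
  "gauss_interval_const = 2 * exp (- 9 / 2) / sqrt (2 * pi)"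

lemma gauss_interval_const_pos: "0 < gauss_interval_const"
  by (simp add: gauss_interval_const_def)

text \<open>On \<open>[-b - m, -b + m]\<close> with \<open>m = min u \<sigma>\<close> every point has modulus at most \<open>3\<sigma>\<close>,
  so the density is at least \<open>exp (-9/2)\<close> times its maximum.\<close>
lemma normal_density_interval_ge:
  fixes \<sigma> b u :: real
  assumes "0 < \<sigma>" "\<bar>b\<bar> \<le> 2 * \<sigma>" "0 < u"
  shows "ennreal (gauss_interval_const * min u \<sigma> / \<sigma>) \<le>
    (\<integral>\<^sup>+ y. indicator {y. \<bar>y + b\<bar> \<le> u} y * ennreal (normal_density 0 \<sigma> y) \<partial>lborel)"
proof -
  define m where "m = min u \<sigma>"
  have m: "0 < m" "m \<le> u" "m \<le> \<sigma>" using assms by (auto simp: m_def)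
  define C where "C = exp (- 9 / 2) / (\<sigma> * sqrt (2 * pi))"
  have sq: "sqrt (2 * pi * \<sigma>\<^sup>2) = \<sigma> * sqrt (2 * pi)"
    using assms by (simp add: real_sqrt_mult)
  have "ennreal (C * ((- b + m) - (- b - m))) \<le>
      (\<integral>\<^sup>+ y. indicator {y. \<bar>y + b\<bar> \<le> u} y * ennreal (normal_density 0 \<sigma> y) \<partial>lborel)"
  proof (rule nn_integral_indicator_ge_interval)
    show "- b - m \<le> - b + m" "{- b - m..- b + m} \<subseteq> {y. \<bar>y + b\<bar> \<le> u}" using m by auto
    show "0 \<le> C" using assms by (simp add: C_def)
    fix y assume "y \<in> {- b - m..- b + m}"
    then have "\<bar>y\<bar> \<le> 3 * \<sigma>" using assms m by auto
    then have "y\<^sup>2 \<le> (3 * \<sigma>)\<^sup>2"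
      by (metis abs_le_square_iff abs_of_pos assms(1) mult_pos_pos zero_less_numeral abs_mult abs_numeral)
    then have "exp (- 9 / 2) \<le> exp (- y\<^sup>2 / (2 * \<sigma>\<^sup>2))"
      using assms by (simp add: divide_simps power_mult_distrib)
    then show "C \<le> normal_density 0 \<sigma> y"
      unfolding normal_density_def C_def sq using assms by (simp add: divide_right_mono)
  qed
  also have "C * ((- b + m) - (- b - m)) = gauss_interval_const * m / \<sigma>"
    unfolding C_def gauss_interval_const_def using assms by (simp add: field_simps)
  finally show ?thesis by (simp add: m_def)
qed

definition gauss_tail_const :: real where
  "gauss_tail_const = exp (- 1 / 2) / (2 * sqrt (2 * pi))"

lemma gauss_tail_const_pos: "0 < gauss_tail_const"
  by (simp add: gauss_tail_const_def)

lemma emeasure_std_gauss_abs_ge_half: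
  "gauss_tail_const \<le> emeasure std_gauss {y. 1/2 \<le> \<bar>y\<bar>}"
proof -
  define C where "C = exp (- 1 / 2) / sqrt (2 * pi)"
  have "ennreal (C * (1 - 1/2)) \<le>
      (\<integral>\<^sup>+ y. indicator {y. 1/2 \<le> \<bar>y\<bar>} y * ennreal (std_normal_density y) \<partial>lborel)"
  proof (rule nn_integral_indicator_ge_interval)
    show "{1 / 2..1::real} \<subseteq> {y. 1 / 2 \<le> \<bar>y\<bar>}" by auto
    show "0 \<le> C" by (simp add: C_def)
    fix y :: real assume "y \<in> {1 / 2..1}"
    then have "exp (- 1 / 2) \<le> exp (- y\<^sup>2 / 2)" by (simp add: abs_square_le_1)
    then show "C \<le> std_normal_density y"
      unfolding std_normal_density_def C_def by (simp add: divide_right_mono)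
  qed simp
  also have "\<dots> = (\<integral>\<^sup>+ y. indicator {y. 1/2 \<le> \<bar>y\<bar>} y \<partial>std_gauss)"
    by (subst nn_integral_std_gauss) (auto simp: mult.commute)
  also have "\<dots> = emeasure std_gauss {y. 1/2 \<le> \<bar>y\<bar>}"
    by (rule nn_integral_indicator) simp
  also have "C * (1 - 1/2) = gauss_tail_const"
    by (simp add: C_def gauss_tail_const_def)
  finally show ?thesis .
qed

section \<open>Linear combinations of independent Gaussians\<close>

lemma prob_space_PiM_std_gauss [simp, intro]: "prob_space (PiM J (\<lambda>_. std_gauss))"
  by (intro prob_space_PiM) auto

interpretation std_gauss_product: product_sigma_finite "\<lambda>_::nat. std_gauss"
  by (auto simp: product_sigma_finite_def prob_space_imp_sigma_finite)

lemma borel_measurable_PiM_std_gauss_component: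
  "k \<in> J \<Longrightarrow> (\<lambda>x. x k) \<in> borel_measurable (PiM J (\<lambda>_. std_gauss))"
  using measurable_component_singleton[of k J "\<lambda>_. std_gauss"]
  by (simp add: measurable_cong_sets[OF refl sets_std_gauss])

lemma borel_measurable_PiM_std_gauss_lincomb [measurable]:
  "(\<lambda>x. \<Sum>k\<in>J. \<beta> k * x k) \<in> borel_measurable (PiM J (\<lambda>_. std_gauss))"
  by (intro borel_measurable_sum borel_measurable_times borel_measurable_PiM_std_gauss_component
      measurable_const) auto

lemma distr_PiM_std_gauss_component:
  assumes "k \<in> J" "sets N = sets borel"
  shows "distr (PiM J (\<lambda>_. std_gauss)) N (\<lambda>x. x k) = std_gauss"
proof -
  have "distr (PiM J (\<lambda>_. std_gauss)) N (\<lambda>x. x k) = distr (PiM J (\<lambda>_. std_gauss)) std_gauss (\<lambda>x. x k)"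
    by (rule distr_cong) (use assms in auto)
  also have "\<dots> = std_gauss"
    using distr_PiM_component[of J "\<lambda>_. std_gauss" k] assms by simp
  finally show ?thesis .
qed

lemma indep_vars_PiM_std_gauss:
  assumes "J \<noteq> {}"
  shows "prob_space.indep_vars (PiM J (\<lambda>_. std_gauss)) (\<lambda>_. borel) (\<lambda>k x. x k) J"
proof -
  interpret P: prob_space "PiM J (\<lambda>_. std_gauss)" by simp
  have "distr (PiM J (\<lambda>_. std_gauss)) (PiM J (\<lambda>_. borel)) (\<lambda>x. \<lambda>k\<in>J. x k)
      = distr (PiM J (\<lambda>_. std_gauss)) (PiM J (\<lambda>_. borel)) (\<lambda>x. x)"
    by (rule distr_cong) (auto simp: space_PiM)
  also have "\<dots> = PiM J (\<lambda>_. std_gauss)"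
    by (rule distr_id2) (intro sets_PiM_cong; simp)
  also have "\<dots> = PiM J (\<lambda>k. distr (PiM J (\<lambda>_. std_gauss)) borel (\<lambda>x. x k))"
  proof (intro PiM_cong refl)
    fix k assume "k \<in> J"
    then show "std_gauss = distr (PiM J (\<lambda>_. std_gauss)) borel (\<lambda>x. x k)"
      by (simp add: distr_PiM_std_gauss_component)
  qed
  finally show ?thesis
    using assms by (subst P.indep_vars_iff_distr_eq_PiM') auto
qed

lemma distributed_PiM_std_gauss_component:
  assumes "k \<in> J"
  shows "distributed (PiM J (\<lambda>_. std_gauss)) lborel (\<lambda>x. x k) (\<lambda>y. ennreal (std_normal_density y))"
proof -
  have "distr (PiM J (\<lambda>_. std_gauss)) lborel (\<lambda>x. x k) = std_gauss"
    using assms by (simp add: distr_PiM_std_gauss_component)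
  then show ?thesis
    unfolding distributed_def using assms
    by (auto simp: std_gauss_def intro: borel_measurable_PiM_std_gauss_component)
qed

lemma distributed_PiM_std_gauss_lincomb:
  assumes J: "finite J" and nz: "\<exists>k\<in>J. \<beta> k \<noteq> 0"
  shows "distributed (PiM J (\<lambda>_. std_gauss)) lborel (\<lambda>x. \<Sum>k\<in>J. \<beta> k * x k)
           (\<lambda>y. ennreal (normal_density 0 (sqrt (\<Sum>k\<in>J. (\<beta> k)\<^sup>2)) y))"
proof -
  interpret P: prob_space "PiM J (\<lambda>_. std_gauss)" by simp
  define K where "K = {k\<in>J. \<beta> k \<noteq> 0}"
  have K: "finite K" "K \<noteq> {}" "K \<subseteq> J" using J nz by (auto simp: K_def)
  have lincomb_K: "(\<lambda>x. \<Sum>k\<in>J. \<beta> k * x k) = (\<lambda>x. \<Sum>k\<in>K. \<beta> k * x k)"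
    by (intro ext sum.mono_neutral_right J) (auto simp: K_def)
  have var_K: "(\<Sum>k\<in>J. (\<beta> k)\<^sup>2) = (\<Sum>k\<in>K. \<bar>\<beta> k\<bar>\<^sup>2)"
    by (subst sum.mono_neutral_right[OF J K(3)]) (auto simp: K_def)
  have "P.indep_vars (\<lambda>_. borel) (\<lambda>k. (\<lambda>y. \<beta> k * y) \<circ> (\<lambda>x. x k)) K"
    using P.indep_vars_subset[OF indep_vars_PiM_std_gauss K(3)] K
    by (intro P.indep_vars_compose) auto
  then have indep: "P.indep_vars (\<lambda>_. borel) (\<lambda>k x. \<beta> k * x k) K"
    by (simp add: o_def)
  have "distributed (PiM J (\<lambda>_. std_gauss)) lborel (\<lambda>x. \<Sum>k\<in>K. \<beta> k * x k)
           (\<lambda>y. ennreal (normal_density (\<Sum>k\<in>K. 0) (sqrt (\<Sum>k\<in>K. (\<bar>\<beta> k\<bar>)\<^sup>2)) y))"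
  proof (rule P.sum_indep_normal[OF K(1,2) indep])
    fix k assume k: "k \<in> K"
    then show "0 < \<bar>\<beta> k\<bar>" by (simp add: K_def)
    have "distributed (PiM J (\<lambda>_. std_gauss)) lborel (\<lambda>x. 0 + \<beta> k * x k)
         (\<lambda>y. ennreal (normal_density (0 + \<beta> k * 0) (\<bar>\<beta> k\<bar> * 1) y))"
      using k K
      by (intro P.normal_density_affine distributed_PiM_std_gauss_component) (auto simp: K_def)
    then show "distributed (PiM J (\<lambda>_. std_gauss)) lborel (\<lambda>x. \<beta> k * x k)
         (\<lambda>y. ennreal (normal_density 0 \<bar>\<beta> k\<bar> y))" by simp
  qed
  then show ?thesis unfolding lincomb_K var_K by simp
qed

text \<open>The extra noise \<open>w\<close> is absorbed as one more coordinate \<open>m\<close> with weight 1, so the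
  quantity is a single centred Gaussian of standard deviation between 1 and \<open>s\<close>.\<close>
lemma anticoncentration_std_gauss_lincomb:
  fixes \<beta> :: "nat \<Rightarrow> real"
  assumes J: "finite J" "m \<notin> J" and \<eta>: "\<bar>\<eta>\<bar> \<le> 1" and u: "0 < u" "u \<le> s"
    and var: "1 + (\<Sum>k\<in>J. (\<beta> k)\<^sup>2) \<le> s\<^sup>2"
  shows "ennreal (gauss_interval_const * u / s) \<le>
    (\<integral>\<^sup>+ x. emeasure std_gauss {w. \<bar>(\<Sum>k\<in>J. \<beta> k * x k) + \<eta> + w\<bar> \<le> u} \<partial>PiM J (\<lambda>_. std_gauss))"
proof -
  define \<beta>' where "\<beta>' = \<beta>(m := 1)"
  define \<sigma> where "\<sigma> = sqrt (\<Sum>k\<in>insert m J. (\<beta>' k)\<^sup>2)"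
  have lincomb_upd: "(\<Sum>k\<in>insert m J. \<beta>' k * (x(m := w)) k) = w + (\<Sum>k\<in>J. \<beta> k * x k)" for x w
    using J by (auto simp: \<beta>'_def intro!: sum.cong)
  have "(\<Sum>k\<in>insert m J. (\<beta>' k)\<^sup>2) = 1 + (\<Sum>k\<in>J. (\<beta> k)\<^sup>2)"
    using J by (auto simp: \<beta>'_def intro!: sum.cong)
  then have \<sigma>: "1 \<le> \<sigma>" "\<sigma> \<le> s"
    using var u by (auto simp: \<sigma>_def real_le_lsqrt real_le_rsqrt sum_nonneg)
  have dist: "distributed (PiM (insert m J) (\<lambda>_. std_gauss)) lborel
      (\<lambda>x. \<Sum>k\<in>insert m J. \<beta>' k * x k) (\<lambda>y. ennreal (normal_density 0 \<sigma> y))"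
    unfolding \<sigma>_def using J by (intro distributed_PiM_std_gauss_lincomb) (auto simp: \<beta>'_def)
  have "gauss_interval_const * u / s \<le> gauss_interval_const * min u \<sigma> / \<sigma>"
  proof (cases "u \<le> \<sigma>")
    case True
    then show ?thesis
      using \<sigma> u gauss_interval_const_pos by (simp add: divide_left_mono mult_left_mono)
  next
    case False
    then show ?thesis
      using \<sigma> u gauss_interval_const_pos by (simp add: mult_imp_div_pos_le)
  qed
  then have "ennreal (gauss_interval_const * u / s) \<le> ennreal (gauss_interval_const * min u \<sigma> / \<sigma>)"
    by (rule ennreal_leI)
  also have "\<dots> \<le> (\<integral>\<^sup>+ z. indicator {z. \<bar>z + \<eta>\<bar> \<le> u} z * ennreal (normal_density 0 \<sigma> z) \<partial>lborel)"
    using \<sigma> \<eta> u by (intro normal_density_interval_ge) auto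
  also have "\<dots> = (\<integral>\<^sup>+ x. indicator {z. \<bar>z + \<eta>\<bar> \<le> u} (\<Sum>k\<in>insert m J. \<beta>' k * x k)
      \<partial>PiM (insert m J) (\<lambda>_. std_gauss))"
    by (subst distributed_nn_integral[OF dist, symmetric]) (auto simp: mult.commute)
  also have "\<dots> = (\<integral>\<^sup>+ x. \<integral>\<^sup>+ w. indicator {z. \<bar>z + \<eta>\<bar> \<le> u}
      (\<Sum>k\<in>insert m J. \<beta>' k * (x(m := w)) k) \<partial>std_gauss \<partial>PiM J (\<lambda>_. std_gauss))"
    using J by (intro std_gauss_product.product_nn_integral_insert) auto
  also have "\<dots> = (\<integral>\<^sup>+ x. \<integral>\<^sup>+ w. indicator {w. \<bar>(\<Sum>k\<in>J. \<beta> k * x k) + \<eta> + w\<bar> \<le> u} w \<partial>std_gauss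
      \<partial>PiM J (\<lambda>_. std_gauss))"
    unfolding lincomb_upd by (simp add: indicator_def ac_simps)
  also have "\<dots> = (\<integral>\<^sup>+ x. emeasure std_gauss {w. \<bar>(\<Sum>k\<in>J. \<beta> k * x k) + \<eta> + w\<bar> \<le> u}
      \<partial>PiM J (\<lambda>_. std_gauss))"
    by (intro nn_integral_cong nn_integral_indicator) (simp add: sets_borel_abs_add_le)
  finally show ?thesis .
qed

lemma borel_measurable_emeasure_std_gauss_lincomb:
  "(\<lambda>x. emeasure std_gauss {w. \<bar>(\<Sum>k\<in>J. \<beta> k * x k) + \<eta> + w\<bar> \<le> u})
    \<in> borel_measurable (PiM J (\<lambda>_. std_gauss))"
proof (rule measurable_cong[THEN iffD1])
  show "(\<lambda>x. \<integral>\<^sup>+ w. indicator {- u..u} ((\<Sum>k\<in>J. \<beta> k * x k) + \<eta> + w) \<partial>std_gauss)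
      \<in> borel_measurable (PiM J (\<lambda>_. std_gauss))"
    by (intro sigma_finite_measure.borel_measurable_nn_integral prob_space_imp_sigma_finite)
      measurable
  fix x
  have "indicator {- u..u} ((\<Sum>k\<in>J. \<beta> k * x k) + \<eta> + w)
      = (indicator {w. \<bar>(\<Sum>k\<in>J. \<beta> k * x k) + \<eta> + w\<bar> \<le> u} w :: ennreal)" for w
    by (auto simp: indicator_def abs_le_iff)
  then show "(\<integral>\<^sup>+ w. indicator {- u..u} ((\<Sum>k\<in>J. \<beta> k * x k) + \<eta> + w) \<partial>std_gauss)
      = emeasure std_gauss {w. \<bar>(\<Sum>k\<in>J. \<beta> k * x k) + \<eta> + w\<bar> \<le> u}"
    by (simp add: sets_borel_abs_add_le)
qed

section \<open>A single row of the sample\<close>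

lemma sigma_finite_std_gauss_rademacher: "sigma_finite_measure (std_gauss \<Otimes>\<^sub>M rademacher)"
  by (intro prob_space_imp_sigma_finite prob_space_pair) auto

text \<open>The law of one row \<open>(X\<^sub>i, w\<^sub>i, \<sigma>\<^sub>i)\<close> under \<open>cwm_space\<close>.\<close>
definition row_space :: "nat \<Rightarrow> ((nat \<Rightarrow> real) \<times> real \<times> real) measure" where
  "row_space d = PiM {..<d} (\<lambda>_. std_gauss) \<Otimes>\<^sub>M (std_gauss \<Otimes>\<^sub>M rademacher)"

lemma prob_space_row_space [simp, intro]: "prob_space (row_space d)"
  unfolding row_space_def by (intro prob_space_pair) auto

lemma space_row_space_update:
  assumes "x \<in> space (PiM ({..<d} - {j}) (\<lambda>_. std_gauss))" "j < d"
  shows "(x(j := y), p) \<in> space (row_space d)"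
  using assms by (auto simp: row_space_def space_pair_measure space_PiM PiE_def extensional_def)

lemma borel_measurable_row_space_x: "k < d \<Longrightarrow> (\<lambda>r. fst r k) \<in> borel_measurable (row_space d)"
  unfolding row_space_def
  by (rule measurable_compose[OF measurable_fst borel_measurable_PiM_std_gauss_component]) simp

lemma borel_measurable_row_space_w: "(\<lambda>r. fst (snd r)) \<in> borel_measurable (row_space d)"
  unfolding row_space_def
  by (rule measurable_compose[OF measurable_snd]) (simp add: measurable_fst'')

lemma borel_measurable_row_space_sign: "(\<lambda>r. snd (snd r)) \<in> borel_measurable (row_space d)"
  unfolding row_space_def
  by (rule measurable_compose[OF measurable_snd]) (rule measurable_snd'' borel_measurable_rademacher)+

lemma borel_measurable_row_space_lincomb:
  "(\<lambda>r. \<Sum>k<d. fst r k * \<beta> k) \<in> borel_measurable (row_space d)"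
  by (intro borel_measurable_sum borel_measurable_times borel_measurable_row_space_x
      measurable_const) auto

lemma borel_measurable_row_space_slice:
  assumes h: "h \<in> borel_measurable (row_space d)" and x: "x \<in> space (PiM {..<d} (\<lambda>_. std_gauss))"
  shows "(\<lambda>p. h (x, p)) \<in> borel_measurable (std_gauss \<Otimes>\<^sub>M rademacher)"
  using measurable_Pair2[OF h[unfolded row_space_def] x] by simp

lemma nn_integral_row_space:
  assumes h: "h \<in> borel_measurable (row_space d)"
  shows "(\<integral>\<^sup>+ r. h r \<partial>row_space d) =
    (\<integral>\<^sup>+ x. \<integral>\<^sup>+ w. \<integral>\<^sup>+ \<sigma>. h (x, w, \<sigma>) \<partial>rademacher \<partial>std_gauss \<partial>PiM {..<d} (\<lambda>_. std_gauss))"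
proof -
  have "(\<integral>\<^sup>+ r. h r \<partial>row_space d) =
      (\<integral>\<^sup>+ x. \<integral>\<^sup>+ p. h (x, p) \<partial>(std_gauss \<Otimes>\<^sub>M rademacher) \<partial>PiM {..<d} (\<lambda>_. std_gauss))"
    using h unfolding row_space_def
    by (intro sigma_finite_measure.nn_integral_fst[symmetric] sigma_finite_std_gauss_rademacher)
  also have "\<dots> = (\<integral>\<^sup>+ x. \<integral>\<^sup>+ w. \<integral>\<^sup>+ \<sigma>. h (x, w, \<sigma>) \<partial>rademacher \<partial>std_gauss
      \<partial>PiM {..<d} (\<lambda>_. std_gauss))"
    using borel_measurable_row_space_slice[OF h]
    by (intro nn_integral_cong sigma_finite_measure.nn_integral_fst[symmetric] sigma_finite_rademacher)
      auto
  finally show ?thesis .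
qed

lemma borel_measurable_nn_integral_row_space_slice:
  assumes h: "h \<in> borel_measurable (row_space d)"
  shows "(\<lambda>x. \<integral>\<^sup>+ w. \<integral>\<^sup>+ \<sigma>. h (x, w, \<sigma>) \<partial>rademacher \<partial>std_gauss)
    \<in> borel_measurable (PiM {..<d} (\<lambda>_. std_gauss))"
proof (rule measurable_cong[THEN iffD1])
  show "(\<lambda>x. \<integral>\<^sup>+ p. h (x, p) \<partial>(std_gauss \<Otimes>\<^sub>M rademacher)) \<in> borel_measurable (PiM {..<d} (\<lambda>_. std_gauss))"
    using h unfolding row_space_def
    by (rule sigma_finite_measure.borel_measurable_nn_integral_fst[OF sigma_finite_std_gauss_rademacher])
  fix x assume "x \<in> space (PiM {..<d} (\<lambda>_. std_gauss))"
  then show "(\<integral>\<^sup>+ p. h (x, p) \<partial>(std_gauss \<Otimes>\<^sub>M rademacher)) = (\<integral>\<^sup>+ w. \<integral>\<^sup>+ \<sigma>. h (x, w, \<sigma>) \<partial>rademacher \<partial>std_gauss)"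
    using borel_measurable_row_space_slice[OF h]
    by (intro sigma_finite_measure.nn_integral_fst[symmetric] sigma_finite_rademacher) auto
qed

lemma nn_integral_row_space_coordinate:
  assumes j: "j < d" and h[measurable]: "h \<in> borel_measurable (row_space d)"
  shows "(\<integral>\<^sup>+ r. h r \<partial>row_space d) =
    (\<integral>\<^sup>+ x. \<integral>\<^sup>+ y. \<integral>\<^sup>+ w. (h (x(j := y), w, 1) + h (x(j := y), w, -1)) / 2
        \<partial>std_gauss \<partial>std_gauss \<partial>PiM ({..<d} - {j}) (\<lambda>_. std_gauss))"
proof -
  define G where "G = (\<lambda>x. \<integral>\<^sup>+ w. \<integral>\<^sup>+ \<sigma>. h (x, w, \<sigma>) \<partial>rademacher \<partial>std_gauss)"
  have G: "G \<in> borel_measurable (PiM (insert j ({..<d} - {j})) (\<lambda>_. std_gauss))"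
    using borel_measurable_nn_integral_row_space_slice[OF h] j
    by (simp add: G_def insert_absorb)
  have "(\<integral>\<^sup>+ r. h r \<partial>row_space d) = (\<integral>\<^sup>+ x. G x \<partial>PiM (insert j ({..<d} - {j})) (\<lambda>_. std_gauss))"
    using nn_integral_row_space[OF h] j by (simp add: G_def insert_absorb)
  also have "\<dots> = (\<integral>\<^sup>+ x. \<integral>\<^sup>+ y. G (x(j := y)) \<partial>std_gauss \<partial>PiM ({..<d} - {j}) (\<lambda>_. std_gauss))"
    using G by (intro std_gauss_product.product_nn_integral_insert) auto
  finally show ?thesis
    by (simp add: G_def nn_integral_rademacher)
qed

lemma borel_measurable_nn_integral_row_space_update:
  assumes j: "j < d" and h: "h \<in> borel_measurable (row_space d)"
    and x: "x \<in> space (PiM ({..<d} - {j}) (\<lambda>_. std_gauss))"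
  shows "(\<lambda>y. \<integral>\<^sup>+ w. (h (x(j := y), w, 1) + h (x(j := y), w, -1)) / 2 \<partial>std_gauss)
    \<in> borel_measurable borel"
proof -
  have "(\<lambda>y. x(j := y)) \<in> measurable std_gauss (PiM (insert j ({..<d} - {j})) (\<lambda>_. std_gauss))"
    using x by (rule measurable_component_update) simp
  then have upd: "(\<lambda>y. x(j := y)) \<in> measurable std_gauss (PiM {..<d} (\<lambda>_. std_gauss))"
    using j by (simp add: insert_absorb)
  have slice: "(\<lambda>(y, w). h (x(j := y), w, s)) \<in> borel_measurable (std_gauss \<Otimes>\<^sub>M std_gauss)" for s
  proof -
    have "(\<lambda>p. (x(j := fst p), snd p, s)) \<in> measurable (std_gauss \<Otimes>\<^sub>M std_gauss) (row_space d)"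
      unfolding row_space_def
      by (intro measurable_Pair measurable_compose[OF measurable_fst upd] measurable_snd) auto
    from measurable_compose[OF this h] show ?thesis by (simp add: case_prod_beta')
  qed
  have "(\<lambda>y. \<integral>\<^sup>+ w. (h (x(j := y), w, 1) + h (x(j := y), w, -1)) / 2 \<partial>std_gauss)
      \<in> borel_measurable std_gauss"
    using slice[of 1] slice[of "-1"]
    by (intro sigma_finite_measure.borel_measurable_nn_integral prob_space_imp_sigma_finite)
      (auto simp: case_prod_beta')
  then show ?thesis by (simp add: measurable_cong_sets[OF sets_std_gauss refl])
qed

text \<open>For a row \<open>(x, w, \<sigma>)\<close> with response \<open>y = x \<bullet> \<beta> + \<eta>\<close>, \<open>ratio_error\<close> is
  \<open>y'/X'\<^sub>j - \<beta>\<^sub>j\<close>, and \<open>row_selected j\<close> says that the row belongs to \<open>M\<^sub>j\<close>.\<close>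
definition ratio_error :: "nat \<Rightarrow> (nat \<Rightarrow> real) \<Rightarrow> real \<Rightarrow> nat \<Rightarrow> (nat \<Rightarrow> real) \<times> real \<times> real \<Rightarrow> real"
  where "ratio_error d \<beta> \<eta> j = (\<lambda>(x, w, \<sigma>). (\<sigma> * ((\<Sum>k<d. x k * \<beta> k) + \<eta>) + w) / (\<sigma> * x j) - \<beta> j)"

definition row_selected :: "nat \<Rightarrow> (nat \<Rightarrow> real) \<times> real \<times> real \<Rightarrow> bool"
  where "row_selected j = (\<lambda>(x, w, \<sigma>). 1/2 \<le> \<bar>\<sigma> * x j\<bar>)"

lemma borel_measurable_ratio_error [measurable]:
  "j < d \<Longrightarrow> ratio_error d \<beta> \<eta> j \<in> borel_measurable (row_space d)"
  unfolding ratio_error_def split_beta'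
  using borel_measurable_row_space_x[of j d] borel_measurable_row_space_w[of d]
    borel_measurable_row_space_sign[of d] borel_measurable_row_space_lincomb[where d=d and \<beta>=\<beta>]
  by measurable

lemma pred_row_selected [measurable]: "j < d \<Longrightarrow> Measurable.pred (row_space d) (row_selected j)"
  unfolding row_selected_def split_beta'
  using borel_measurable_row_space_x[of j d] borel_measurable_row_space_sign[of d]
  by measurable

lemma ratio_error_update:
  assumes j: "j < d" and \<sigma>: "\<sigma> = 1 \<or> \<sigma> = -1" and y: "y \<noteq> 0"
  shows "ratio_error d \<beta> \<eta> j (x(j := y), w, \<sigma>) = ((\<Sum>k\<in>{..<d} - {j}. \<beta> k * x k) + \<eta> + \<sigma> * w) / y"
proof -
  have "(\<Sum>k<d. (x(j := y)) k * \<beta> k) = y * \<beta> j + (\<Sum>k\<in>{..<d} - {j}. \<beta> k * x k)"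
    using j by (simp add: sum.remove[of "{..<d}" j] mult.commute)
  then show ?thesis
    using \<sigma> y by (auto simp: ratio_error_def field_simps)
qed

lemma emeasure_ratio_error_reflect:
  assumes j: "j < d"
  shows "emeasure (row_space d) {r \<in> space (row_space d). row_selected j r \<and> t < e * ratio_error d \<beta> \<eta> j r}
       = emeasure (row_space d) {r \<in> space (row_space d). row_selected j r \<and> e * ratio_error d \<beta> \<eta> j r < - t}"
    (is "emeasure _ ?S1 = emeasure _ ?S2")
proof -
  have [measurable]: "?S1 \<in> sets (row_space d)" "?S2 \<in> sets (row_space d)"
    using j by measurable
  let ?J = "{..<d} - {j}"
  let ?avg = "\<lambda>S x y. \<integral>\<^sup>+ w. (indicator S (x(j := y), w, 1) + indicator S (x(j := y), w, -1)) / 2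
    \<partial>std_gauss :: ennreal"
  have reflect: "indicator ?S1 (x(j := - y), w, \<sigma>) = (indicator ?S2 (x(j := y), w, \<sigma>) :: ennreal)"
    if x: "x \<in> space (PiM ?J (\<lambda>_. std_gauss))" and \<sigma>: "\<sigma> = 1 \<or> \<sigma> = -1" for x y w \<sigma>
  proof (cases "y = 0")
    case False
    then have "ratio_error d \<beta> \<eta> j (x(j := - y), w, \<sigma>) = - ratio_error d \<beta> \<eta> j (x(j := y), w, \<sigma>)"
      using \<sigma> by (simp add: ratio_error_update[OF j])
    then show ?thesis
      using space_row_space_update[OF x j] by (auto simp: indicator_def row_selected_def)
  qed (auto simp: indicator_def row_selected_def)
  have "emeasure (row_space d) ?S1 = (\<integral>\<^sup>+ x. \<integral>\<^sup>+ y. ?avg ?S1 x y \<partial>std_gauss \<partial>PiM ?J (\<lambda>_. std_gauss))"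
    using nn_integral_row_space_coordinate[OF j, of "indicator ?S1"] by simp
  also have "\<dots> = (\<integral>\<^sup>+ x. \<integral>\<^sup>+ y. ?avg ?S1 x (- y) \<partial>std_gauss \<partial>PiM ?J (\<lambda>_. std_gauss))"
    using j
    by (intro nn_integral_cong nn_integral_std_gauss_uminus[symmetric]
        borel_measurable_nn_integral_row_space_update) auto
  also have "\<dots> = (\<integral>\<^sup>+ x. \<integral>\<^sup>+ y. ?avg ?S2 x y \<partial>std_gauss \<partial>PiM ?J (\<lambda>_. std_gauss))"
    by (intro nn_integral_cong) (simp add: reflect)
  also have "\<dots> = emeasure (row_space d) ?S2"
    using nn_integral_row_space_coordinate[OF j, of "indicator ?S2"] by simp
  finally show ?thesis .
qed

section \<open>Votes of a single row\<close>

definition row_above :: "nat \<Rightarrow> (nat \<Rightarrow> real) \<Rightarrow> real \<Rightarrow> nat \<Rightarrow> real \<Rightarrow> real \<Rightarrow> ((nat \<Rightarrow> real) \<times> real \<times> real) set"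
  where "row_above d \<beta> \<eta> j e t =
    {r \<in> space (row_space d). row_selected j r \<and> t < e * ratio_error d \<beta> \<eta> j r}"

definition row_below :: "nat \<Rightarrow> (nat \<Rightarrow> real) \<Rightarrow> real \<Rightarrow> nat \<Rightarrow> real \<Rightarrow> real \<Rightarrow> ((nat \<Rightarrow> real) \<times> real \<times> real) set"
  where "row_below d \<beta> \<eta> j e t =
    {r \<in> space (row_space d). row_selected j r \<and> e * ratio_error d \<beta> \<eta> j r \<le> t}"

definition row_near :: "nat \<Rightarrow> (nat \<Rightarrow> real) \<Rightarrow> real \<Rightarrow> nat \<Rightarrow> real \<Rightarrow> ((nat \<Rightarrow> real) \<times> real \<times> real) set"
  where "row_near d \<beta> \<eta> j t =
    {r \<in> space (row_space d). row_selected j r \<and> \<bar>ratio_error d \<beta> \<eta> j r\<bar> \<le> t}"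

lemma sets_row_events [measurable]:
  assumes "j < d"
  shows "row_above d \<beta> \<eta> j e t \<in> sets (row_space d)" "row_below d \<beta> \<eta> j e t \<in> sets (row_space d)"
    "row_near d \<beta> \<eta> j t \<in> sets (row_space d)"
  unfolding row_above_def row_below_def row_near_def using assms by measurable

text \<open>The vote of a row for the event that the median exceeds \<open>\<beta>\<^sub>j\<close> by more than \<open>t\<close>
  in the direction \<open>e \<in> {1, -1}\<close>; unselected rows abstain.\<close>
definition row_vote :: "nat \<Rightarrow> (nat \<Rightarrow> real) \<Rightarrow> real \<Rightarrow> nat \<Rightarrow> real \<Rightarrow> real \<Rightarrow> (nat \<Rightarrow> real) \<times> real \<times> real \<Rightarrow> real"
  where "row_vote d \<beta> \<eta> j e t r = indicator (row_above d \<beta> \<eta> j e t) r - indicator (row_below d \<beta> \<eta> j e t) r"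

lemma borel_measurable_row_vote [measurable]:
  "j < d \<Longrightarrow> row_vote d \<beta> \<eta> j e t \<in> borel_measurable (row_space d)"
  unfolding row_vote_def by measurable

lemma prob_row_above_plus_near_le_below:
  assumes j: "j < d" and e: "e = 1 \<or> e = -1" and t: "0 \<le> t"
  shows "measure (row_space d) (row_above d \<beta> \<eta> j e t) + measure (row_space d) (row_near d \<beta> \<eta> j t)
     \<le> measure (row_space d) (row_below d \<beta> \<eta> j e t)"
proof -
  interpret R: prob_space "row_space d" by simp
  let ?C = "{r \<in> space (row_space d). row_selected j r \<and> e * ratio_error d \<beta> \<eta> j r < - t}"
  have [measurable]: "?C \<in> sets (row_space d)" using j by measurable
  have "measure (row_space d) (row_above d \<beta> \<eta> j e t) = measure (row_space d) ?C"
    unfolding row_above_def measure_def using emeasure_ratio_error_reflect[OF j] by simp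
  moreover have "measure (row_space d) ?C + measure (row_space d) (row_near d \<beta> \<eta> j t)
      = measure (row_space d) (?C \<union> row_near d \<beta> \<eta> j t)"
    using j e by (intro R.finite_measure_Union[symmetric]) (auto simp: row_near_def abs_mult)
  moreover have "?C \<union> row_near d \<beta> \<eta> j t \<subseteq> row_below d \<beta> \<eta> j e t"
    using e t by (auto simp: row_near_def row_below_def abs_le_iff)
  then have "measure (row_space d) (?C \<union> row_near d \<beta> \<eta> j t) \<le> measure (row_space d) (row_below d \<beta> \<eta> j e t)"
    using j by (intro R.finite_measure_mono) auto
  ultimately show ?thesis by simp
qed

lemma row_vote_mgf_le:
  assumes j: "j < d" and e: "e = 1 \<or> e = -1" and l: "0 < l" and t: "0 \<le> t"
  shows "(\<integral>\<^sup>+ r. ennreal (exp (l * row_vote d \<beta> \<eta> j e t r)) \<partial>row_space d)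
     \<le> ennreal (exp (- l * measure (row_space d) (row_near d \<beta> \<eta> j t) + l\<^sup>2 / 2))"
proof -
  interpret R: prob_space "row_space d" by simp
  let ?Z = "row_vote d \<beta> \<eta> j e t"
  interpret Z: interval_bounded_random_variable "row_space d" ?Z "-1" 1
    using j by unfold_locales (auto simp: row_vote_def indicator_def)
  define EZ where "EZ = R.expectation ?Z"
  have "EZ = measure (row_space d) (row_above d \<beta> \<eta> j e t) - measure (row_space d) (row_below d \<beta> \<eta> j e t)"
    unfolding EZ_def row_vote_def using sets_row_events[OF j]
    by (subst Bochner_Integration.integral_diff)
      (auto intro!: integrable_real_indicator simp: R.emeasure_finite less_top[symmetric])
  then have EZ: "EZ \<le> - measure (row_space d) (row_near d \<beta> \<eta> j t)"
    using prob_row_above_plus_near_le_below[OF j e t, of \<beta> \<eta>] by simp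
  have "(\<integral>\<^sup>+ r. ennreal (exp (l * ?Z r)) \<partial>row_space d)
      = (\<integral>\<^sup>+ r. ennreal (exp (l * EZ)) * ennreal (exp (l * (?Z r - EZ))) \<partial>row_space d)"
    by (intro nn_integral_cong) (simp add: ennreal_mult[symmetric] mult_exp_exp algebra_simps)
  also have "\<dots> = ennreal (exp (l * EZ)) * (\<integral>\<^sup>+ r. ennreal (exp (l * (?Z r - EZ))) \<partial>row_space d)"
    using j by (intro nn_integral_cmult) measurable
  also have "\<dots> \<le> ennreal (exp (l * EZ)) * ennreal (exp (l\<^sup>2 * (1 - - 1)\<^sup>2 / 8))"
    unfolding EZ_def by (intro mult_left_mono Z.Hoeffdings_lemma_nn_integral l) simp
  also have "\<dots> = ennreal (exp (l * EZ + l\<^sup>2 / 2))"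
    by (simp add: ennreal_mult[symmetric] mult_exp_exp)
  also have "\<dots> \<le> ennreal (exp (- l * measure (row_space d) (row_near d \<beta> \<eta> j t) + l\<^sup>2 / 2))"
    using mult_left_mono[OF EZ, of l] l by (intro ennreal_leI) simp
  finally show ?thesis .
qed

definition near_const :: real where
  "near_const = gauss_tail_const * gauss_interval_const / 2"

lemma near_const_pos: "0 < near_const"
  using gauss_tail_const_pos gauss_interval_const_pos by (simp add: near_const_def)

text \<open>With constant probability \<open>|x\<^sub>j| \<ge> 1/2\<close>, and then the ratio error is at most \<open>t\<close> as soon
  as \<open>|\<Sum>\<^sub>k\<^sub>\<noteq>\<^sub>j \<beta>\<^sub>k x\<^sub>k + \<eta> + \<sigma> w| \<le> t/2\<close>; the sign \<open>\<sigma>\<close> is absorbed by the symmetry of \<open>w\<close>.\<close>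
lemma nn_integral_row_near_slice_ge:
  fixes \<beta> :: "nat \<Rightarrow> real"
  assumes j: "j < d" and x: "x \<in> space (PiM ({..<d} - {j}) (\<lambda>_. std_gauss))"
  shows "ennreal gauss_tail_const * emeasure std_gauss {w. \<bar>(\<Sum>k\<in>{..<d} - {j}. \<beta> k * x k) + \<eta> + w\<bar> \<le> t / 2}
    \<le> (\<integral>\<^sup>+ y. \<integral>\<^sup>+ w. (indicator (row_near d \<beta> \<eta> j t) (x(j := y), w, 1)
          + indicator (row_near d \<beta> \<eta> j t) (x(j := y), w, -1)) / 2 \<partial>std_gauss \<partial>std_gauss)"
proof -
  let ?T = "row_near d \<beta> \<eta> j t"
  let ?S = "\<Sum>k\<in>{..<d} - {j}. \<beta> k * x k"
  define Y where "Y = {y::real. 1/2 \<le> \<bar>y\<bar>}"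
  define A where "A = {w. \<bar>?S + \<eta> + w\<bar> \<le> t / 2}"
  have [measurable]: "Y \<in> sets borel" "A \<in> sets borel"
    by (auto simp: Y_def A_def sets_borel_abs_add_le)
  have near: "(x(j := y), w, \<sigma>) \<in> ?T" if "y \<in> Y" "\<sigma> = 1 \<or> \<sigma> = -1" "\<sigma> * w \<in> A" for y w \<sigma>
  proof -
    have "0 \<le> t / 2"
      using that(3) unfolding A_def by (blast intro: order_trans[OF abs_ge_zero])
    then have "\<bar>?S + \<eta> + \<sigma> * w\<bar> / \<bar>y\<bar> \<le> (t / 2) / (1/2)"
      using that by (intro frac_le) (auto simp: Y_def A_def)
    moreover have "\<bar>ratio_error d \<beta> \<eta> j (x(j := y), w, \<sigma>)\<bar> = \<bar>?S + \<eta> + \<sigma> * w\<bar> / \<bar>y\<bar>"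
      using that by (subst ratio_error_update[OF j]) (auto simp: Y_def)
    ultimately show ?thesis
      using that space_row_space_update[OF x j] by (auto simp: row_near_def row_selected_def Y_def)
  qed
  have "ennreal gauss_tail_const * emeasure std_gauss A \<le> emeasure std_gauss Y * emeasure std_gauss A"
    using emeasure_std_gauss_abs_ge_half by (intro mult_right_mono) (auto simp: Y_def)
  also have "\<dots> = (\<integral>\<^sup>+ y. indicator Y y * (\<integral>\<^sup>+ w. (indicator A w + indicator A (- w)) / 2
      \<partial>std_gauss) \<partial>std_gauss)"
    using nn_integral_multc[of "indicator Y" std_gauss "emeasure std_gauss A"]
    by (simp add: nn_integral_std_gauss_symmetrize borel_measurable_indicator)
  also have "\<dots> = (\<integral>\<^sup>+ y. \<integral>\<^sup>+ w. indicator Y y * ((indicator A w + indicator A (- w)) / 2)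
      \<partial>std_gauss \<partial>std_gauss)"
    by (intro nn_integral_cong nn_integral_cmult[symmetric]) measurable
  also have "\<dots> \<le> (\<integral>\<^sup>+ y. \<integral>\<^sup>+ w. (indicator ?T (x(j := y), w, 1) + indicator ?T (x(j := y), w, -1)) / 2
      \<partial>std_gauss \<partial>std_gauss)"
  proof (intro nn_integral_mono)
    fix y w
    show "indicator Y y * ((indicator A w + indicator A (- w)) / 2)
        \<le> (indicator ?T (x(j := y), w, 1) + indicator ?T (x(j := y), w, -1)) / (2::ennreal)"
    proof (cases "y \<in> Y")
      case True
      then have "indicator A w \<le> (indicator ?T (x(j := y), w, 1) :: ennreal)"
        "indicator A (- w) \<le> (indicator ?T (x(j := y), w, -1) :: ennreal)"
        using near[of y 1 w] near[of y "-1" w] by (auto simp: indicator_def)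
      then show ?thesis
        using True by (auto intro!: divide_right_mono_ennreal add_mono)
    qed simp
  qed
  finally show ?thesis by (simp only: A_def)
qed

lemma prob_row_near_ge:
  fixes \<beta> :: "nat \<Rightarrow> real"
  assumes j: "j < d" and \<eta>: "\<bar>\<eta>\<bar> \<le> 1" and t: "0 < t" "t \<le> s"
    and s: "1 + (\<Sum>k<d. (\<beta> k)\<^sup>2) \<le> s\<^sup>2"
  shows "near_const * t / s \<le> measure (row_space d) (row_near d \<beta> \<eta> j t)"
proof -
  interpret R: prob_space "row_space d" by simp
  let ?T = "row_near d \<beta> \<eta> j t"
  let ?J = "{..<d} - {j}"
  let ?A = "\<lambda>x. emeasure std_gauss {w. \<bar>(\<Sum>k\<in>?J. \<beta> k * x k) + \<eta> + w\<bar> \<le> t / 2}"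
  have [measurable]: "?T \<in> sets (row_space d)" using j by simp
  have "(\<Sum>k\<in>?J. (\<beta> k)\<^sup>2) \<le> (\<Sum>k<d. (\<beta> k)\<^sup>2)" by (intro sum_mono2) auto
  then have anti: "ennreal (gauss_interval_const * (t / 2) / s) \<le> (\<integral>\<^sup>+ x. ?A x \<partial>PiM ?J (\<lambda>_. std_gauss))"
    using \<eta> t s by (intro anticoncentration_std_gauss_lincomb) auto
  have "ennreal (near_const * t / s) = ennreal gauss_tail_const * ennreal (gauss_interval_const * (t / 2) / s)"
    using gauss_tail_const_pos gauss_interval_const_pos t by (simp add: ennreal_mult[symmetric] near_const_def)
  also have "\<dots> \<le> ennreal gauss_tail_const * (\<integral>\<^sup>+ x. ?A x \<partial>PiM ?J (\<lambda>_. std_gauss))"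
    by (intro mult_left_mono anti) simp
  also have "\<dots> = (\<integral>\<^sup>+ x. ennreal gauss_tail_const * ?A x \<partial>PiM ?J (\<lambda>_. std_gauss))"
    by (intro nn_integral_cmult[symmetric] borel_measurable_emeasure_std_gauss_lincomb)
  also have "\<dots> \<le> (\<integral>\<^sup>+ x. \<integral>\<^sup>+ y. \<integral>\<^sup>+ w. (indicator ?T (x(j := y), w, 1) + indicator ?T (x(j := y), w, -1)) / 2
      \<partial>std_gauss \<partial>std_gauss \<partial>PiM ?J (\<lambda>_. std_gauss))"
    using j by (intro nn_integral_mono nn_integral_row_near_slice_ge)
  also have "\<dots> = emeasure (row_space d) ?T"
    using nn_integral_row_space_coordinate[OF j, of "indicator ?T"] by simp
  finally show ?thesis
    using near_const_pos t by (simp add: R.emeasure_eq_measure)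
qed

section \<open>Independence of the rows\<close>

lemma prob_space_cwm_space [simp, intro]: "prob_space (cwm_space n d)"
  unfolding cwm_space_def by (intro prob_space_pair prob_space_PiM) auto

definition row_of :: "nat \<Rightarrow> (nat \<Rightarrow> nat \<Rightarrow> real) \<times> (nat \<Rightarrow> real) \<times> (nat \<Rightarrow> real) \<Rightarrow> (nat \<Rightarrow> real) \<times> real \<times> real"
  where "row_of i = (\<lambda>(X, w, \<sigma>). (X i, w i, \<sigma> i))"

lemma measurable_row_of: "i < n \<Longrightarrow> row_of i \<in> measurable (cwm_space n d) (row_space d)"
  unfolding cwm_space_def row_space_def row_of_def split_beta'
  by (intro measurable_Pair measurable_compose[OF measurable_fst measurable_component_singleton]
      measurable_compose[OF measurable_snd measurable_compose[OF measurable_fst measurable_component_singleton]]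
      measurable_compose[OF measurable_snd measurable_compose[OF measurable_snd measurable_component_singleton]])
    auto

lemma row_of_in_space: "\<omega> \<in> space (cwm_space n d) \<Longrightarrow> i < n \<Longrightarrow> row_of i \<omega> \<in> space (row_space d)"
  using measurable_space[OF measurable_row_of] by blast

interpretation rademacher_product: product_sigma_finite "\<lambda>_::nat. rademacher"
  by (auto simp: product_sigma_finite_def prob_space_imp_sigma_finite)

interpretation std_gauss_row_product: product_sigma_finite "\<lambda>_::nat. PiM {..<d} (\<lambda>_::nat. std_gauss)"
  by (auto simp: product_sigma_finite_def prob_space_imp_sigma_finite)

lemma nn_integral_cwm_space_prod:
  assumes h: "\<And>i. i < n \<Longrightarrow> h i \<in> borel_measurable (row_space d)"
  shows "(\<integral>\<^sup>+ \<omega>. (\<Prod>i<n. h i (row_of i \<omega>)) \<partial>cwm_space n d) = (\<Prod>i<n. \<integral>\<^sup>+ r. h i r \<partial>row_space d)"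
proof -
  let ?A = "PiM {..<n} (\<lambda>i. PiM {..<d} (\<lambda>j. std_gauss))"
  let ?B = "PiM {..<n} (\<lambda>i. std_gauss)"
  let ?C = "PiM {..<n} (\<lambda>i. rademacher)"
  define F where "F = (\<lambda>\<omega>. \<Prod>i<n. h i (row_of i \<omega>))"
  have F: "F \<in> borel_measurable (?A \<Otimes>\<^sub>M (?B \<Otimes>\<^sub>M ?C))"
    unfolding F_def cwm_space_def[symmetric]
    by (intro borel_measurable_prod_ennreal measurable_compose[OF measurable_row_of h]) auto
  have sigma_finite_C: "sigma_finite_measure ?C"
    by (intro prob_space_imp_sigma_finite prob_space_PiM) auto
  have sigma_finite_BC: "sigma_finite_measure (?B \<Otimes>\<^sub>M ?C)"
    by (intro prob_space_imp_sigma_finite prob_space_pair prob_space_PiM) auto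
  have row_space_X: "X i \<in> space (PiM {..<d} (\<lambda>_. std_gauss))" if "X \<in> space ?A" "i < n" for X i
    using that by (auto simp: space_PiM PiE_def Pi_def)
  have "(\<integral>\<^sup>+ \<omega>. F \<omega> \<partial>cwm_space n d) = (\<integral>\<^sup>+ X. \<integral>\<^sup>+ p. F (X, p) \<partial>(?B \<Otimes>\<^sub>M ?C) \<partial>?A)"
    unfolding cwm_space_def by (rule sigma_finite_measure.nn_integral_fst[OF sigma_finite_BC F, symmetric])
  also have "\<dots> = (\<integral>\<^sup>+ X. (\<Prod>i<n. \<integral>\<^sup>+ w. \<integral>\<^sup>+ \<sigma>. h i (X i, w, \<sigma>) \<partial>rademacher \<partial>std_gauss) \<partial>?A)"
  proof (intro nn_integral_cong)
    fix X assume X: "X \<in> space ?A"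
    have "(\<integral>\<^sup>+ p. F (X, p) \<partial>(?B \<Otimes>\<^sub>M ?C)) = (\<integral>\<^sup>+ w. \<integral>\<^sup>+ \<sigma>. F (X, w, \<sigma>) \<partial>?C \<partial>?B)"
      by (rule sigma_finite_measure.nn_integral_fst[OF sigma_finite_C measurable_Pair2[OF F X], symmetric])
    also have "\<dots> = (\<integral>\<^sup>+ w. (\<Prod>i<n. \<integral>\<^sup>+ \<sigma>. h i (X i, w i, \<sigma>) \<partial>rademacher) \<partial>?B)"
      unfolding F_def row_of_def
      by (intro nn_integral_cong)
        (simp, rule rademacher_product.product_nn_integral_prod, auto intro: borel_measurable_rademacher)
    also have "\<dots> = (\<Prod>i<n. \<integral>\<^sup>+ w. \<integral>\<^sup>+ \<sigma>. h i (X i, w, \<sigma>) \<partial>rademacher \<partial>std_gauss)"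
    proof (rule std_gauss_product.product_nn_integral_prod)
      fix i assume "i \<in> {..<n}"
      then have "(\<lambda>(w, \<sigma>). h i (X i, w, \<sigma>)) \<in> borel_measurable (std_gauss \<Otimes>\<^sub>M rademacher)"
        using borel_measurable_row_space_slice[OF h row_space_X[OF X]] by (simp add: split_beta')
      then show "(\<lambda>w. \<integral>\<^sup>+ \<sigma>. h i (X i, w, \<sigma>) \<partial>rademacher) \<in> borel_measurable std_gauss"
        by (intro sigma_finite_measure.borel_measurable_nn_integral[OF sigma_finite_rademacher])
    qed simp
    finally show "(\<integral>\<^sup>+ p. F (X, p) \<partial>(?B \<Otimes>\<^sub>M ?C))
        = (\<Prod>i<n. \<integral>\<^sup>+ w. \<integral>\<^sup>+ \<sigma>. h i (X i, w, \<sigma>) \<partial>rademacher \<partial>std_gauss)" .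
  qed
  also have "\<dots> = (\<Prod>i<n. \<integral>\<^sup>+ x. \<integral>\<^sup>+ w. \<integral>\<^sup>+ \<sigma>. h i (x, w, \<sigma>) \<partial>rademacher \<partial>std_gauss
      \<partial>PiM {..<d} (\<lambda>_. std_gauss))"
    by (rule std_gauss_row_product.product_nn_integral_prod)
      (auto intro: borel_measurable_nn_integral_row_space_slice h)
  also have "\<dots> = (\<Prod>i<n. \<integral>\<^sup>+ r. h i r \<partial>row_space d)"
    by (intro prod.cong refl nn_integral_row_space[symmetric] h) auto
  finally show ?thesis unfolding F_def .
qed

definition vote_sum :: "nat \<Rightarrow> nat \<Rightarrow> (nat \<Rightarrow> real) \<Rightarrow> (nat \<Rightarrow> real) \<Rightarrow> nat \<Rightarrow> real \<Rightarrow> real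
    \<Rightarrow> (nat \<Rightarrow> nat \<Rightarrow> real) \<times> (nat \<Rightarrow> real) \<times> (nat \<Rightarrow> real) \<Rightarrow> real"
  where "vote_sum n d \<beta> \<eta> j e t \<omega> = (\<Sum>i<n. row_vote d \<beta> (\<eta> i) j e t (row_of i \<omega>))"

lemma borel_measurable_vote_sum [measurable]:
  "j < d \<Longrightarrow> vote_sum n d \<beta> \<eta> j e t \<in> borel_measurable (cwm_space n d)"
  unfolding vote_sum_def
  by (intro borel_measurable_sum measurable_compose[OF measurable_row_of borel_measurable_row_vote]) auto

lemma emeasure_vote_sum_nonneg_le:
  assumes j: "j < d" and e: "e = 1 \<or> e = -1" and t: "0 \<le> t" and l: "0 < l"
  shows "emeasure (cwm_space n d) {\<omega> \<in> space (cwm_space n d). 0 \<le> vote_sum n d \<beta> \<eta> j e t \<omega>}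
    \<le> ennreal (exp (- l * (\<Sum>i<n. measure (row_space d) (row_near d \<beta> (\<eta> i) j t)) + real n * l\<^sup>2 / 2))"
proof -
  let ?M = "cwm_space n d" and ?V = "vote_sum n d \<beta> \<eta> j e t"
  have [measurable]: "?V \<in> borel_measurable ?M" using j by simp
  have "emeasure ?M {\<omega> \<in> space ?M. 0 \<le> ?V \<omega>} = (\<integral>\<^sup>+ \<omega>. indicator {\<omega> \<in> space ?M. 0 \<le> ?V \<omega>} \<omega> \<partial>?M)"
    by simp
  also have "\<dots> \<le> (\<integral>\<^sup>+ \<omega>. ennreal (exp (l * ?V \<omega>)) \<partial>?M)"
    using l by (intro nn_integral_mono) (auto simp: indicator_def)
  also have "\<dots> = (\<integral>\<^sup>+ \<omega>. (\<Prod>i<n. ennreal (exp (l * row_vote d \<beta> (\<eta> i) j e t (row_of i \<omega>)))) \<partial>?M)"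
    by (simp add: vote_sum_def sum_distrib_left exp_sum prod_ennreal)
  also have "\<dots> = (\<Prod>i<n. \<integral>\<^sup>+ r. ennreal (exp (l * row_vote d \<beta> (\<eta> i) j e t r)) \<partial>row_space d)"
    using j by (intro nn_integral_cwm_space_prod) measurable
  also have "\<dots> \<le> (\<Prod>i<n. ennreal (exp (- l * measure (row_space d) (row_near d \<beta> (\<eta> i) j t) + l\<^sup>2 / 2)))"
    by (intro prod_mono_ennreal row_vote_mgf_le[OF j e l t])
  also have "\<dots> = ennreal (exp (- l * (\<Sum>i<n. measure (row_space d) (row_near d \<beta> (\<eta> i) j t)) + real n * l\<^sup>2 / 2))"
    by (simp add: prod_ennreal exp_sum[symmetric] sum_subtractf sum_negf sum_distrib_left)
  finally show ?thesis .
qed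

text \<open>Chernoff's bound with the optimal parameter \<open>l = P / n\<close>.\<close>
lemma prob_vote_sum_nonneg_le:
  assumes j: "j < d" and e: "e = 1 \<or> e = -1" and t: "0 \<le> t" and n: "0 < n"
    and P: "0 \<le> P" "P \<le> (\<Sum>i<n. measure (row_space d) (row_near d \<beta> (\<eta> i) j t))"
  shows "measure (cwm_space n d) {\<omega> \<in> space (cwm_space n d). 0 \<le> vote_sum n d \<beta> \<eta> j e t \<omega>}
    \<le> exp (- P\<^sup>2 / (2 * real n))"
proof (cases "P = 0")
  case True
  then show ?thesis by (simp add: prob_space.prob_le_1)
next
  case False
  interpret M: prob_space "cwm_space n d" by simp
  define l where "l = P / real n"
  have l: "0 < l" using P False n by (simp add: l_def)
  have "- l * (\<Sum>i<n. measure (row_space d) (row_near d \<beta> (\<eta> i) j t)) + real n * l\<^sup>2 / 2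
      \<le> - l * P + real n * l\<^sup>2 / 2"
    using P l by (simp add: mult_left_mono)
  also have "\<dots> = - P\<^sup>2 / (2 * real n)"
    using n by (simp add: l_def power2_eq_square field_simps)
  finally have exponent: "- l * (\<Sum>i<n. measure (row_space d) (row_near d \<beta> (\<eta> i) j t))
      + real n * l\<^sup>2 / 2 \<le> - P\<^sup>2 / (2 * real n)" .
  have "measure (cwm_space n d) {\<omega> \<in> space (cwm_space n d). 0 \<le> vote_sum n d \<beta> \<eta> j e t \<omega>}
      \<le> exp (- l * (\<Sum>i<n. measure (row_space d) (row_near d \<beta> (\<eta> i) j t)) + real n * l\<^sup>2 / 2)"
    using emeasure_vote_sum_nonneg_le[OF j e t l, of n \<beta> \<eta>] by (simp add: M.emeasure_eq_measure)
  also have "\<dots> \<le> exp (- P\<^sup>2 / (2 * real n))"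
    using exponent by simp
  finally show ?thesis .
qed

section \<open>Medians\<close>

lemma sorted_nth_iff_less_length_filter:
  fixes ys :: "'a::linorder list"
  assumes sorted: "sorted ys" and k: "k < length ys" and down: "\<And>x y. x \<le> y \<Longrightarrow> P y \<Longrightarrow> P x"
  shows "P (ys ! k) \<longleftrightarrow> k < length (filter P ys)"
proof -
  have count: "length (filter P ys) = card {i. i < length ys \<and> P (ys ! i)}"
    by (rule length_filter_conv_card)
  show ?thesis
  proof
    assume "P (ys ! k)"
    have "{..k} \<subseteq> {i. i < length ys \<and> P (ys ! i)}"
    proof
      fix i assume "i \<in> {..k}"
      then have "ys ! i \<le> ys ! k" using sorted k by (intro sorted_nth_mono) auto
      with \<open>P (ys ! k)\<close> \<open>i \<in> {..k}\<close> k show "i \<in> {i. i < length ys \<and> P (ys ! i)}"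
        by (auto intro: down)
    qed
    then have "card {..k} \<le> card {i. i < length ys \<and> P (ys ! i)}"
      by (intro card_mono) auto
    then show "k < length (filter P ys)" using count by simp
  next
    assume "k < length (filter P ys)"
    show "P (ys ! k)"
    proof (rule ccontr)
      assume "\<not> P (ys ! k)"
      have "{i. i < length ys \<and> P (ys ! i)} \<subseteq> {..<k}"
      proof (rule subsetI, rule ccontr)
        fix i assume i: "i \<in> {i. i < length ys \<and> P (ys ! i)}" "i \<notin> {..<k}"
        then have "ys ! k \<le> ys ! i" using sorted by (intro sorted_nth_mono) auto
        with i \<open>\<not> P (ys ! k)\<close> show False by (auto intro: down)
      qed
      then have "card {i. i < length ys \<and> P (ys ! i)} \<le> card {..<k}"
        by (intro card_mono) auto
      with \<open>k < length (filter P ys)\<close> count show False by simp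
    qed
  qed
qed

lemma length_filter_sort: "length (filter P (sort xs)) = length (filter P xs)"
  by (metis mset_filter mset_sort size_mset)

lemma median_between_middle:
  fixes xs :: "real list"
  assumes "xs \<noteq> []"
  shows "sort xs ! ((length xs - 1) div 2) \<le> median xs" "median xs \<le> sort xs ! (length xs div 2)"
proof -
  define ys where "ys = sort xs"
  define k where "k = length xs"
  have k: "0 < k" "length ys = k" "sort xs \<noteq> []"
    using assms by (auto simp: k_def ys_def) (metis length_0_conv length_sort)
  have median: "median xs = (if odd k then ys ! (k div 2) else (ys ! (k div 2 - 1) + ys ! (k div 2)) / 2)"
    using k by (simp add: median_def Let_def ys_def k_def)
  have mono: "ys ! (k div 2 - 1) \<le> ys ! (k div 2)"
    using k by (intro sorted_nth_mono) (auto simp: ys_def)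
  have "odd k \<Longrightarrow> (k - 1) div 2 = k div 2" "even k \<Longrightarrow> (k - 1) div 2 = k div 2 - 1"
    using k by (auto elim!: oddE evenE)
  then show "sort xs ! ((length xs - 1) div 2) \<le> median xs" "median xs \<le> sort xs ! (length xs div 2)"
    using mono unfolding median ys_def[symmetric] k_def[symmetric] by auto
qed

lemma median_le:
  fixes xs :: "real list"
  assumes "length xs < 2 * length (filter (\<lambda>x. x \<le> a) xs)"
  shows "median xs \<le> a"
proof -
  have "xs \<noteq> []" using assms by auto
  then have "length xs div 2 < length xs" by simp
  have "length xs div 2 < length (filter (\<lambda>x. x \<le> a) (sort xs))"
    using assms by (simp add: length_filter_sort)
  then have "sort xs ! (length xs div 2) \<le> a"
    using \<open>length xs div 2 < length xs\<close>
    by (subst sorted_nth_iff_less_length_filter[where P = "\<lambda>x. x \<le> a"]) auto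
  then show ?thesis
    using median_between_middle(2)[OF \<open>xs \<noteq> []\<close>] by linarith
qed

lemma median_ge:
  fixes xs :: "real list"
  assumes "length xs < 2 * length (filter (\<lambda>x. b \<le> x) xs)"
  shows "b \<le> median xs"
proof -
  have "xs \<noteq> []" using assms by auto
  then have "(length xs - 1) div 2 < length xs" by (cases "length xs") auto
  have "length (filter (\<lambda>x. x < b) xs) + length (filter (\<lambda>x. b \<le> x) xs) = length xs"
    using sum_length_filter_compl[of "\<lambda>x. x < b" xs] by (simp add: not_less)
  then have "\<not> (length xs - 1) div 2 < length (filter (\<lambda>x. x < b) (sort xs))"
    using assms by (simp add: length_filter_sort)
  then have "\<not> sort xs ! ((length xs - 1) div 2) < b"
    using \<open>(length xs - 1) div 2 < length xs\<close>
    by (subst sorted_nth_iff_less_length_filter[where P = "\<lambda>x. x < b"]) auto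
  then show ?thesis
    using median_between_middle(1)[OF \<open>xs \<noteq> []\<close>] by linarith
qed

lemma length_filter_map_filter_upt:
  "length (filter P (map f (filter Q [0..<n]))) = card {i. i < n \<and> Q i \<and> P (f i)}"
proof -
  have "length (filter P (map f (filter Q [0..<n]))) = length (filter (\<lambda>i. Q i \<and> P (f i)) [0..<n])"
    by (simp add: filter_map filter_filter o_def conj_commute)
  also have "\<dots> = card {i. i < n \<and> Q i \<and> P (f i)}"
    by (subst length_filter_conv_card) (auto intro!: arg_cong[where f = card])
  finally show ?thesis .
qed

lemma borel_measurable_card_Collect:
  fixes n :: nat
  assumes "\<And>i. i < n \<Longrightarrow> {\<omega> \<in> space M. P i \<omega>} \<in> sets M"
  shows "(\<lambda>\<omega>. real (card {i. i < n \<and> P i \<omega>})) \<in> borel_measurable M"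
proof (rule measurable_cong[THEN iffD1])
  show "(\<lambda>\<omega>. \<Sum>i<n. indicator {\<omega> \<in> space M. P i \<omega>} \<omega> :: real) \<in> borel_measurable M"
    using assms by (intro borel_measurable_sum borel_measurable_indicator) auto
  fix \<omega> assume "\<omega> \<in> space M"
  then have "(\<Sum>i<n. indicator {\<omega> \<in> space M. P i \<omega>} \<omega> :: real) = (\<Sum>i<n. if P i \<omega> then 1 else 0)"
    by (intro sum.cong) (auto simp: indicator_def)
  also have "\<dots> = real (card {i \<in> {..<n}. P i \<omega>})"
    using sum.inter_filter[of "{..<n}" "\<lambda>_. 1 :: real" "\<lambda>i. P i \<omega>"] by auto
  also have "{i \<in> {..<n}. P i \<omega>} = {i. i < n \<and> P i \<omega>}" by auto
  finally show "(\<Sum>i<n. indicator {\<omega> \<in> space M. P i \<omega>} \<omega> :: real) = real (card {i. i < n \<and> P i \<omega>})"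
    by simp
qed

lemma borel_measurable_sorted_nth_filter:
  fixes r :: "nat \<Rightarrow> 'a \<Rightarrow> real" and q :: "nat \<Rightarrow> 'a \<Rightarrow> bool"
  assumes r: "\<And>i. i < n \<Longrightarrow> r i \<in> borel_measurable M"
    and q: "\<And>i. i < n \<Longrightarrow> {\<omega> \<in> space M. q i \<omega>} \<in> sets M"
  shows "(\<lambda>\<omega>. let L = map (\<lambda>i. r i \<omega>) (filter (\<lambda>i. q i \<omega>) [0..<n]) in
    if k < length L then sort L ! k else 0) \<in> borel_measurable M"
proof -
  define L where "L = (\<lambda>\<omega>. map (\<lambda>i. r i \<omega>) (filter (\<lambda>i. q i \<omega>) [0..<n]))"
  define cnt where "cnt a \<omega> = real (card {i. i < n \<and> q i \<omega> \<and> r i \<omega> \<le> a})" for a \<omega>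
  have [measurable]: "(\<lambda>\<omega>. real (length (L \<omega>))) \<in> borel_measurable M"
    using length_filter_map_filter_upt[of "\<lambda>_. True" "\<lambda>i. r i \<omega>" "\<lambda>i. q i \<omega>" n for \<omega>]
    by (simp add: L_def borel_measurable_card_Collect q)
  have [measurable]: "cnt a \<in> borel_measurable M" for a
    unfolding cnt_def
  proof (rule borel_measurable_card_Collect)
    fix i assume i: "i < n"
    have "{\<omega> \<in> space M. q i \<omega> \<and> r i \<omega> \<le> a} = {\<omega> \<in> space M. q i \<omega>} \<inter> {\<omega> \<in> space M. r i \<omega> \<le> a}"
      by auto
    then show "{\<omega> \<in> space M. q i \<omega> \<and> r i \<omega> \<le> a} \<in> sets M"
      using q[OF i] r[OF i] by simp
  qed
  have le_iff: "(if k < length (L \<omega>) then sort (L \<omega>) ! k else 0) \<le> a \<longleftrightarrow>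
      (real k < real (length (L \<omega>)) \<and> real k < cnt a \<omega>) \<or> (real (length (L \<omega>)) \<le> real k \<and> 0 \<le> a)"
    for \<omega> a
  proof (cases "k < length (L \<omega>)")
    case True
    have "sort (L \<omega>) ! k \<le> a \<longleftrightarrow> k < length (filter (\<lambda>x. x \<le> a) (sort (L \<omega>)))"
      using True by (intro sorted_nth_iff_less_length_filter) auto
    also have "length (filter (\<lambda>x. x \<le> a) (sort (L \<omega>))) = card {i. i < n \<and> q i \<omega> \<and> r i \<omega> \<le> a}"
      by (simp only: length_filter_sort L_def length_filter_map_filter_upt)
    finally show ?thesis
      using True by (simp add: cnt_def)
  qed simp
  have "(\<lambda>\<omega>. if k < length (L \<omega>) then sort (L \<omega>) ! k else 0) \<in> borel_measurable M"
    unfolding borel_measurable_iff_le le_iff by (intro allI) measurable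
  then show ?thesis unfolding L_def Let_def .
qed

lemma borel_measurable_median_filter:
  fixes r :: "nat \<Rightarrow> 'a \<Rightarrow> real" and q :: "nat \<Rightarrow> 'a \<Rightarrow> bool"
  assumes r: "\<And>i. i < n \<Longrightarrow> r i \<in> borel_measurable M"
    and q: "\<And>i. i < n \<Longrightarrow> {\<omega> \<in> space M. q i \<omega>} \<in> sets M"
  shows "(\<lambda>\<omega>. median (map (\<lambda>i. r i \<omega>) (filter (\<lambda>i. q i \<omega>) [0..<n]))) \<in> borel_measurable M"
proof -
  define L where "L = (\<lambda>\<omega>. map (\<lambda>i. r i \<omega>) (filter (\<lambda>i. q i \<omega>) [0..<n]))"
  define order_stat where "order_stat = (\<lambda>k \<omega>. if k < length (L \<omega>) then sort (L \<omega>) ! k else 0)"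
  define G where "G = (\<lambda>m \<omega>. if m = 0 then 0 else if odd m then order_stat (m div 2) \<omega>
      else (order_stat (m div 2 - 1) \<omega> + order_stat (m div 2) \<omega>) / 2)"
  have [measurable]: "order_stat k \<in> borel_measurable M" for k
    using borel_measurable_sorted_nth_filter[where r = r and q = q and M = M and n = n and k = k, OF r q]
    unfolding order_stat_def L_def Let_def .
  have length_L: "(\<lambda>\<omega>. real (length (L \<omega>))) \<in> borel_measurable M"
    using length_filter_map_filter_upt[of "\<lambda>_. True" "\<lambda>i. r i \<omega>" "\<lambda>i. q i \<omega>" n for \<omega>]
    by (simp add: L_def borel_measurable_card_Collect q)
  have "(\<lambda>\<omega>. length (L \<omega>)) \<in> measurable M (count_space UNIV)"
    unfolding measurable_count_space_eq2_countable
  proof (intro conjI ballI)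
    fix m :: nat
    have "(\<lambda>\<omega>. length (L \<omega>)) -` {m} \<inter> space M = {\<omega> \<in> space M. real (length (L \<omega>)) = real m}"
      by auto
    then show "(\<lambda>\<omega>. length (L \<omega>)) -` {m} \<inter> space M \<in> sets M"
      using borel_measurable_eq[OF length_L borel_measurable_const, of "real m"] by simp
  qed simp
  then have "(\<lambda>\<omega>. G (length (L \<omega>)) \<omega>) \<in> borel_measurable M"
    by (rule measurable_compose_countable'[rotated]) (unfold G_def, measurable)
  moreover have "median (L \<omega>) = G (length (L \<omega>)) \<omega>" for \<omega>
  proof (cases "L \<omega> = []")
    case False
    then have "sort (L \<omega>) \<noteq> []" "length (L \<omega>) div 2 < length (L \<omega>)"
      "length (L \<omega>) div 2 - 1 < length (L \<omega>)"
      by (metis length_0_conv length_sort, simp, simp add: less_imp_diff_less)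
    then show ?thesis using False by (simp add: median_def Let_def G_def order_stat_def)
  qed (simp add: median_def G_def)
  ultimately show ?thesis unfolding L_def by simp
qed

lemma sum_indicator_comp_eq_card:
  fixes n :: nat
  shows "(\<Sum>i<n. indicator (S i) (g i) :: real) = real (card {i. i < n \<and> g i \<in> S i})"
  by (simp add: indicator_def lessThan_def Collect_conj_eq)

section \<open>The coordinate-wise median estimator\<close>

definition selected_ratios :: "nat \<Rightarrow> nat \<Rightarrow> (nat \<Rightarrow> real) \<Rightarrow> (nat \<Rightarrow> real) \<Rightarrow> nat
    \<Rightarrow> (nat \<Rightarrow> nat \<Rightarrow> real) \<times> (nat \<Rightarrow> real) \<times> (nat \<Rightarrow> real) \<Rightarrow> real list"
  where "selected_ratios n d \<beta> \<eta> j \<omega> = map (\<lambda>i. ratio_error d \<beta> (\<eta> i) j (row_of i \<omega>) + \<beta> j)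
    (filter (\<lambda>i. row_selected j (row_of i \<omega>)) [0..<n])"

lemma cwm_estimate_eq_median_selected_ratios:
  "cwm_estimate n (\<lambda>i. (\<Sum>k<d. X i k * \<beta> k) + \<eta> i) X w \<sigma> j
    = median (selected_ratios n d \<beta> \<eta> j (X, w, \<sigma>))"
  by (simp add: cwm_estimate_def selected_ratios_def ratio_error_def row_selected_def row_of_def)

lemma borel_measurable_median_selected_ratios [measurable]:
  assumes j: "j < d"
  shows "(\<lambda>\<omega>. median (selected_ratios n d \<beta> \<eta> j \<omega>)) \<in> borel_measurable (cwm_space n d)"
  unfolding selected_ratios_def
proof (rule borel_measurable_median_filter)
  fix i assume i: "i < n"
  show "(\<lambda>\<omega>. ratio_error d \<beta> (\<eta> i) j (row_of i \<omega>) + \<beta> j) \<in> borel_measurable (cwm_space n d)"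
    using measurable_row_of[OF i] j by measurable
  show "{\<omega> \<in> space (cwm_space n d). row_selected j (row_of i \<omega>)} \<in> sets (cwm_space n d)"
    using measurable_row_of[OF i] j by measurable
qed

lemma vote_sum_neg_iff:
  assumes \<omega>: "\<omega> \<in> space (cwm_space n d)"
  shows "vote_sum n d \<beta> \<eta> j e t \<omega> < 0 \<longleftrightarrow>
    length (selected_ratios n d \<beta> \<eta> j \<omega>)
      < 2 * length (filter (\<lambda>x. e * (x - \<beta> j) \<le> t) (selected_ratios n d \<beta> \<eta> j \<omega>))"
proof -
  let ?sel = "\<lambda>i. row_selected j (row_of i \<omega>)"
  let ?err = "\<lambda>i. ratio_error d \<beta> (\<eta> i) j (row_of i \<omega>)"
  define below where "below = card {i. i < n \<and> ?sel i \<and> e * ?err i \<le> t}"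
  define above where "above = card {i. i < n \<and> ?sel i \<and> \<not> e * ?err i \<le> t}"
  have "vote_sum n d \<beta> \<eta> j e t \<omega>
      = (\<Sum>i<n. indicator (row_above d \<beta> (\<eta> i) j e t) (row_of i \<omega>))
        - (\<Sum>i<n. indicator (row_below d \<beta> (\<eta> i) j e t) (row_of i \<omega>))"
    by (simp add: vote_sum_def row_vote_def sum_subtractf)
  also have "\<dots> = real above - real below"
    unfolding sum_indicator_comp_eq_card above_def below_def
    using row_of_in_space[OF \<omega>]
    by (intro arg_cong2[where f = "(-)"] arg_cong[where f = "\<lambda>A. real (card A)"])
      (auto simp: row_above_def row_below_def not_le)
  finally have vote_sum: "vote_sum n d \<beta> \<eta> j e t \<omega> = real above - real below" .
  have "length (selected_ratios n d \<beta> \<eta> j \<omega>) = card {i. i < n \<and> ?sel i}"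
    using length_filter_map_filter_upt[of "\<lambda>_. True"] by (simp add: selected_ratios_def)
  also have "{i. i < n \<and> ?sel i} = {i. i < n \<and> ?sel i \<and> e * ?err i \<le> t} \<union> {i. i < n \<and> ?sel i \<and> \<not> e * ?err i \<le> t}"
    by auto
  finally have "length (selected_ratios n d \<beta> \<eta> j \<omega>) = below + above"
    by (simp add: card_Un_disjoint disjoint_iff below_def above_def)
  moreover have "length (filter (\<lambda>x. e * (x - \<beta> j) \<le> t) (selected_ratios n d \<beta> \<eta> j \<omega>)) = below"
    unfolding selected_ratios_def length_filter_map_filter_upt below_def by simp
  ultimately show ?thesis
    using vote_sum by simp
qed

lemma median_selected_ratios_close:
  assumes \<omega>: "\<omega> \<in> space (cwm_space n d)"
    and votes: "vote_sum n d \<beta> \<eta> j 1 t \<omega> < 0" "vote_sum n d \<beta> \<eta> j (-1) t \<omega> < 0"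
  shows "\<bar>median (selected_ratios n d \<beta> \<eta> j \<omega>) - \<beta> j\<bar> \<le> t"
proof -
  let ?L = "selected_ratios n d \<beta> \<eta> j \<omega>"
  have "median ?L \<le> \<beta> j + t"
    using votes(1) vote_sum_neg_iff[OF \<omega>] by (intro median_le) (simp add: algebra_simps)
  moreover have "\<beta> j - t \<le> median ?L"
    using votes(2) vote_sum_neg_iff[OF \<omega>] by (intro median_ge) (simp add: algebra_simps)
  ultimately show ?thesis by (simp add: abs_le_iff)
qed

lemma sum_prob_row_near_ge:
  assumes j: "j < d" and t: "0 < t" "t \<le> s" and s: "1 + (\<Sum>k<d. (\<beta> k)\<^sup>2) \<le> s\<^sup>2"
    and good: "\<alpha> * real n \<le> real (card {i \<in> {..<n}. \<bar>\<eta> i\<bar> \<le> 1})"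
  shows "\<alpha> * real n * (near_const * t / s) \<le> (\<Sum>i<n. measure (row_space d) (row_near d \<beta> (\<eta> i) j t))"
proof -
  let ?G = "{i \<in> {..<n}. \<bar>\<eta> i\<bar> \<le> 1}"
  have "\<alpha> * real n * (near_const * t / s) \<le> real (card ?G) * (near_const * t / s)"
    using good near_const_pos t by (intro mult_right_mono) auto
  also have "\<dots> = (\<Sum>i\<in>?G. near_const * t / s)" by simp
  also have "\<dots> \<le> (\<Sum>i\<in>?G. measure (row_space d) (row_near d \<beta> (\<eta> i) j t))"
    using j t s by (intro sum_mono prob_row_near_ge) auto
  also have "\<dots> \<le> (\<Sum>i<n. measure (row_space d) (row_near d \<beta> (\<eta> i) j t))"
    by (intro sum_mono2) auto
  finally show ?thesis .
qed

lemma prob_median_selected_ratios_far: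
  assumes j: "j < d" and t: "0 < t" "t \<le> s" and s: "1 + (\<Sum>k<d. (\<beta> k)\<^sup>2) \<le> s\<^sup>2"
    and \<alpha>: "0 < \<alpha>" and n: "0 < n"
    and good: "\<alpha> * real n \<le> real (card {i \<in> {..<n}. \<bar>\<eta> i\<bar> \<le> 1})"
  shows "measure (cwm_space n d) {\<omega> \<in> space (cwm_space n d). t < \<bar>median (selected_ratios n d \<beta> \<eta> j \<omega>) - \<beta> j\<bar>}
    \<le> 2 * exp (- (\<alpha> * real n * (near_const * t / s))\<^sup>2 / (2 * real n))"
proof -
  interpret M: prob_space "cwm_space n d" by simp
  let ?T = "\<lambda>e. {\<omega> \<in> space (cwm_space n d). 0 \<le> vote_sum n d \<beta> \<eta> j e t \<omega>}"
  let ?p = "exp (- (\<alpha> * real n * (near_const * t / s))\<^sup>2 / (2 * real n))"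
  have T[measurable]: "?T e \<in> sets (cwm_space n d)" for e
    using j by measurable
  have P: "0 \<le> \<alpha> * real n * (near_const * t / s)"
    using \<alpha> near_const_pos t by simp
  have T_prob: "measure (cwm_space n d) (?T e) \<le> ?p" if "e = 1 \<or> e = -1" for e
    using t by (intro prob_vote_sum_nonneg_le[OF j that _ n P sum_prob_row_near_ge[OF j t s good]]) simp
  have "{\<omega> \<in> space (cwm_space n d). t < \<bar>median (selected_ratios n d \<beta> \<eta> j \<omega>) - \<beta> j\<bar>} \<subseteq> ?T 1 \<union> ?T (-1)"
  proof
    fix \<omega> assume \<omega>: "\<omega> \<in> {\<omega> \<in> space (cwm_space n d). t < \<bar>median (selected_ratios n d \<beta> \<eta> j \<omega>) - \<beta> j\<bar>}"
    then have "\<not> (vote_sum n d \<beta> \<eta> j 1 t \<omega> < 0 \<and> vote_sum n d \<beta> \<eta> j (-1) t \<omega> < 0)"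
      using median_selected_ratios_close[of \<omega> n d \<beta> \<eta> j t] by auto
    then show "\<omega> \<in> ?T 1 \<union> ?T (-1)"
      using \<omega> by (auto simp: not_less)
  qed
  then have "measure (cwm_space n d) {\<omega> \<in> space (cwm_space n d). t < \<bar>median (selected_ratios n d \<beta> \<eta> j \<omega>) - \<beta> j\<bar>}
      \<le> measure (cwm_space n d) (?T 1 \<union> ?T (-1))"
    by (intro M.finite_measure_mono) auto
  also have "\<dots> \<le> measure (cwm_space n d) (?T 1) + measure (cwm_space n d) (?T (-1))"
    by (intro measure_Un_le) auto
  also have "\<dots> \<le> 2 * ?p"
    using T_prob[of 1] T_prob[of "-1"] by simp
  finally show ?thesis .
qed

lemma (in prob_space) prob_sum_squares_le_ge:
  assumes f: "\<And>j. j < d \<Longrightarrow> f j \<in> borel_measurable M"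
    and p: "\<And>j. j < d \<Longrightarrow> prob {x \<in> space M. t < \<bar>f j x\<bar>} \<le> p"
  shows "1 - real d * p \<le> prob {x \<in> space M. (\<Sum>j<d. (f j x)\<^sup>2) \<le> real d * t\<^sup>2}"
proof -
  let ?B = "\<lambda>j. {x \<in> space M. t < \<bar>f j x\<bar>}"
  have B[measurable]: "?B j \<in> events" if "j < d" for j
    using f[OF that] by measurable
  have "space M - (\<Union>j<d. ?B j) \<subseteq> {x \<in> space M. (\<Sum>j<d. (f j x)\<^sup>2) \<le> real d * t\<^sup>2}"
  proof safe
    fix x assume "x \<in> space M" "x \<notin> (\<Union>j<d. ?B j)"
    then have "(f j x)\<^sup>2 \<le> t\<^sup>2" if "j < d" for j
      using that power_mono[of "\<bar>f j x\<bar>" t 2] by (auto simp: not_less)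
    then show "(\<Sum>j<d. (f j x)\<^sup>2) \<le> real d * t\<^sup>2"
      using sum_mono[of "{..<d}" "\<lambda>j. (f j x)\<^sup>2" "\<lambda>_. t\<^sup>2"] by simp
  qed
  moreover have "(\<lambda>x. \<Sum>j<d. (f j x)\<^sup>2) \<in> borel_measurable M"
    using f by (intro borel_measurable_sum borel_measurable_power) auto
  ultimately have "prob (space M - (\<Union>j<d. ?B j)) \<le> prob {x \<in> space M. (\<Sum>j<d. (f j x)\<^sup>2) \<le> real d * t\<^sup>2}"
    by (intro finite_measure_mono) auto
  moreover have "prob (\<Union>j<d. ?B j) \<le> (\<Sum>j<d. prob (?B j))"
    using B by (intro finite_measure_subadditive_finite) auto
  moreover have "(\<Sum>j<d. prob (?B j)) \<le> real d * p"
    using sum_mono[of "{..<d}" "\<lambda>j. prob (?B j)" "\<lambda>_. p"] p by simp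
  moreover have "prob (space M - (\<Union>j<d. ?B j)) = 1 - prob (\<Union>j<d. ?B j)"
    using B by (intro prob_compl) auto
  ultimately show ?thesis by linarith
qed

lemma prob_median_selected_ratios_far_scaled:
  fixes \<beta> \<eta> :: "nat \<Rightarrow> real"
  assumes j: "j < d" and \<alpha>: "0 < \<alpha>" and \<tau>: "0 < \<tau>" "\<tau> \<le> \<alpha>\<^sup>2 * real n"
    and good: "\<alpha> * real n \<le> real (card {i \<in> {..<n}. \<bar>\<eta> i\<bar> \<le> 1})"
  defines "t \<equiv> sqrt (1 + (\<Sum>k<d. (\<beta> k)\<^sup>2)) * sqrt (\<tau> / (\<alpha>\<^sup>2 * real n))"
  shows "measure (cwm_space n d) {\<omega> \<in> space (cwm_space n d). t < \<bar>median (selected_ratios n d \<beta> \<eta> j \<omega>) - \<beta> j\<bar>}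
    \<le> 2 * exp (- (near_const\<^sup>2 / 2 * \<tau>))"
proof -
  define s where "s = sqrt (1 + (\<Sum>k<d. (\<beta> k)\<^sup>2))"
  define r where "r = \<tau> / (\<alpha>\<^sup>2 * real n)"
  have n: "0 < n" using \<tau> by (cases n) auto
  have s: "1 \<le> s" "1 + (\<Sum>k<d. (\<beta> k)\<^sup>2) \<le> s\<^sup>2"
    by (simp_all add: s_def sum_nonneg)
  have r: "0 < r" "r \<le> 1" using \<alpha> \<tau> n by (simp_all add: r_def)
  have t_eq: "t = s * sqrt r" by (simp add: t_def s_def r_def)
  have t: "0 < t" "t \<le> s"
    using s r by (simp_all add: t_eq mult_le_cancel_left1)
  have "(\<alpha> * real n * (near_const * t / s))\<^sup>2 / (2 * real n) = (\<alpha> * real n * near_const)\<^sup>2 * r / (2 * real n)"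
    using s r by (simp add: t_eq power_mult_distrib)
  also have "\<dots> = near_const\<^sup>2 / 2 * (\<alpha>\<^sup>2 * real n * r)"
    using n by (simp add: power2_eq_square field_simps)
  also have "\<alpha>\<^sup>2 * real n * r = \<tau>"
    using \<alpha> n by (simp add: r_def)
  finally have "- (\<alpha> * real n * (near_const * t / s))\<^sup>2 / (2 * real n) = - (near_const\<^sup>2 / 2 * \<tau>)"
    by simp
  with prob_median_selected_ratios_far[OF j t s(2) \<alpha> n good] show ?thesis
    by (simp only:)
qed

lemma exp_ln_diff:
  fixes a x :: real
  assumes "0 < a"
  shows "exp (ln a - x) = a * exp (- x)"
proof -
  have "exp (ln a - x) = exp (ln a) / exp x" by (rule exp_diff)
  also have "exp (ln a) = a" using assms by simp
  finally show ?thesis by (simp only: exp_minus divide_inverse)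
qed

theorem mainTheorem14:
  "\<exists>c::real. c > 0 \<and>
    (\<forall>(n::nat) (d::nat) (\<beta>::nat \<Rightarrow> real) (\<eta>::nat \<Rightarrow> real) (\<alpha>::real) (\<tau>::real).
       0 < \<alpha> \<and> \<alpha> \<le> 1 \<and>
       real (card {i \<in> {..<n}. \<bar>\<eta> i\<bar> \<le> 1}) \<ge> \<alpha> * real n \<and>
       0 < \<tau> \<and> \<tau> \<le> \<alpha>\<^sup>2 * real n \<longrightarrow>
       measure (cwm_space n d)
         {(X, w, \<sigma>) \<in> space (cwm_space n d).
            (let y = (\<lambda>i. (\<Sum>j<d. X i j * \<beta> j) + \<eta> i) in
             (\<Sum>j<d. (\<beta> j - cwm_estimate n y X w \<sigma> j)\<^sup>2)
               \<le> real d * \<tau> / (\<alpha>\<^sup>2 * real n) * (1 + (\<Sum>j<d. (\<beta> j)\<^sup>2)))}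
       \<ge> 1 - 2 * exp (ln (real d) - c * \<tau>))"
proof (intro exI[of _ "near_const\<^sup>2 / 2"] conjI allI impI)
  show "0 < near_const\<^sup>2 / 2" using near_const_pos by simp
  fix n d :: nat and \<beta> \<eta> :: "nat \<Rightarrow> real" and \<alpha> \<tau> :: real
  assume "0 < \<alpha> \<and> \<alpha> \<le> 1 \<and> \<alpha> * real n \<le> real (card {i \<in> {..<n}. \<bar>\<eta> i\<bar> \<le> 1}) \<and>
    0 < \<tau> \<and> \<tau> \<le> \<alpha>\<^sup>2 * real n"
  then have \<alpha>: "0 < \<alpha>" and good: "\<alpha> * real n \<le> real (card {i \<in> {..<n}. \<bar>\<eta> i\<bar> \<le> 1})"
    and \<tau>: "0 < \<tau>" "\<tau> \<le> \<alpha>\<^sup>2 * real n" by auto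
  interpret M: prob_space "cwm_space n d" by simp
  define t where "t = sqrt (1 + (\<Sum>k<d. (\<beta> k)\<^sup>2)) * sqrt (\<tau> / (\<alpha>\<^sup>2 * real n))"
  have "(\<lambda>\<omega>. median (selected_ratios n d \<beta> \<eta> j \<omega>) - \<beta> j) \<in> borel_measurable (cwm_space n d)"
    if "j < d" for j
    using that by measurable
  moreover have "M.prob {\<omega> \<in> space (cwm_space n d). t < \<bar>median (selected_ratios n d \<beta> \<eta> j \<omega>) - \<beta> j\<bar>}
      \<le> 2 * exp (- (near_const\<^sup>2 / 2 * \<tau>))" if "j < d" for j
    unfolding t_def using that \<alpha> \<tau> good by (rule prob_median_selected_ratios_far_scaled)
  ultimately have "1 - real d * (2 * exp (- (near_const\<^sup>2 / 2 * \<tau>))) \<le> M.prob {\<omega> \<in> space (cwm_space n d).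
      (\<Sum>j<d. (median (selected_ratios n d \<beta> \<eta> j \<omega>) - \<beta> j)\<^sup>2) \<le> real d * t\<^sup>2}"
    by (rule M.prob_sum_squares_le_ge[where f = "\<lambda>j \<omega>. median (selected_ratios n d \<beta> \<eta> j \<omega>) - \<beta> j"])
  \<comment> \<open>for \<open>d = 0\<close> the bound holds as well, since \<open>ln 0 = 0\<close>\<close>
  moreover have "1 - 2 * exp (ln (real d) - near_const\<^sup>2 / 2 * \<tau>) \<le> 1 - real d * (2 * exp (- (near_const\<^sup>2 / 2 * \<tau>)))"
    by (cases "d = 0") (simp_all add: exp_ln_diff)
  moreover have "real d * t\<^sup>2 = real d * \<tau> / (\<alpha>\<^sup>2 * real n) * (1 + (\<Sum>j<d. (\<beta> j)\<^sup>2))"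
  proof -
    have "t\<^sup>2 = (1 + (\<Sum>j<d. (\<beta> j)\<^sup>2)) * (\<tau> / (\<alpha>\<^sup>2 * real n))"
      using \<tau> sum_nonneg[of "{..<d}" "\<lambda>j. (\<beta> j)\<^sup>2"] unfolding t_def
      by (simp only: power_mult_distrib real_sqrt_pow2) simp
    then show ?thesis by (simp add: mult_ac)
  qed
  ultimately show "1 - 2 * exp (ln (real d) - near_const\<^sup>2 / 2 * \<tau>) \<le> measure (cwm_space n d)
      {(X, w, \<sigma>) \<in> space (cwm_space n d).
        (let y = (\<lambda>i. (\<Sum>j<d. X i j * \<beta> j) + \<eta> i) in
          (\<Sum>j<d. (\<beta> j - cwm_estimate n y X w \<sigma> j)\<^sup>2)
            \<le> real d * \<tau> / (\<alpha>\<^sup>2 * real n) * (1 + (\<Sum>j<d. (\<beta> j)\<^sup>2)))}"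
    by (simp add: cwm_estimate_eq_median_selected_ratios power2_commute case_prod_beta')
qed

end
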